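(* Let $\Lambda=KQ/\langle I\rangle$ be a gentle algebra over an algebraically closed field $K$, let $\Gamma=KQ^{Aus}/\langle I^{Aus}\rangle$ be its Cohen–Macaulay Auslander algebra, and let $\Phi:\mathrm{mod}\,\Lambda\to\mathrm{mod}\,\Gamma$ be the functor described in the context. Then for every projective $\Lambda$-module $P$ the $\Gamma$-module $\Phi(P)$ is projective, and for every injective $\Lambda$-module $J$ the $\Gamma$-module $\Phi(J)$ is injective.
   Context: Conventions: arrows $\alpha:s(\alpha)\to t(\alpha)$; paths composed right to left ($\beta\alpha$ means $\alpha$ then $\beta$). A gentle algebra is a finite dimensional $\Lambda=KQ/\langle I\rangle$ where $I$ is a set of length-$2$ paths such that: each vertex is the start of at most two and the end of at most two arrows; for each arrow $\alpha$ there is at most one arrow $\beta$ with $t(\beta)=s(\alpha)$, $\alpha\beta\notin I$, at most one $\gamma$ with $s(\gamma)=t(\alpha)$, $\gamma\alpha\notin I$, at most one $\beta$ with $t(\beta)=s(\alpha)$, $\alpha\beta\in I$, and at most one $\gamma$ with $s(\gamma)=t(\alpha)$, $\gamma\alpha\in I$. Modules are finite dimensional left modules, i.e. representations of $(Q,I)$. $\mathcal{C}(\Lambda)$ is the set of repetition-free cyclic paths $\alpha_1\cdots\alpha_n$ (up to cyclic permutation) with $\alpha_i\alpha_{i+1}\in I$ for all $i$ (indices mod $n$); $Q_1^{cyc}$ is the set of arrows lying on such a cycle, $Q_1^{ncyc}=Q_1\setminus Q_1^{cyc}$. $Q^{Aus}$ has vertices $Q_0\sqcup Q_1^{cyc}$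 and arrows $Q_1^{ncyc}\sqcup\{\alpha^+:s(\alpha)\to\alpha\}_{\alpha\in Q_1^{cyc}}\sqcup\{\alpha^-:\alpha\to t(\alpha)\}_{\alpha\in Q_1^{cyc}}$; $I^{Aus}=\{\beta^+\alpha^-\mid\beta\alpha\in I,\ \alpha,\beta\in Q_1^{cyc}\}\cup\{\beta\alpha\mid\beta\alpha\in I,\ \alpha,\beta\in Q_1^{ncyc}\}$; $\Gamma=KQ^{Aus}/\langle I^{Aus}\rangle$ is (isomorphic to) the Cohen–Macaulay Auslander algebra of $\Lambda$. $\Phi(M)=\widehat{M}$ has $\widehat{M}_i=M_i$ ($i\in Q_0$), $\widehat{M}_\alpha=\mathrm{Im}\,M_\alpha$ ($\alpha\in Q_1^{cyc}$), $\widehat{M}_\beta=M_\beta$ ($\beta\in Q_1^{ncyc}$), and $\widehat{M}_{\alpha^+}$, $\widehat{M}_{\alpha^-}$ the surjection $M_{s(\alpha)}\to\mathrm{Im}\,M_\alpha$ and inclusion $\mathrm{Im}\,M_\alpha\to M_{t(\alpha)}$ factoring $M_\alpha$; morphisms go to induced morphisms. *)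

theory Defs
  imports "Jordan_Normal_Form.Matrix" "HOL-Computational_Algebra.Polynomial"
begin

definition alg_closed :: "'a::field itself \<Rightarrow> bool" where
  "alg_closed _ \<longleftrightarrow> (\<forall>p :: 'a poly. degree p > 0 \<longrightarrow> (\<exists>x. poly p x = 0))"

text \<open>A relation (b, a) in I stands for the path b a (first a, then b).\<close>

definition is_rep :: "'v set \<Rightarrow> 'e set \<Rightarrow> ('e \<Rightarrow> 'v) \<Rightarrow> ('e \<Rightarrow> 'v) \<Rightarrow> ('e \<times> 'e) set
    \<Rightarrow> ('v \<Rightarrow> nat) \<Rightarrow> ('e \<Rightarrow> 'a::field mat) \<Rightarrow> bool" where
  "is_rep V E s t I d m \<longleftrightarrow>
     (\<forall>e\<in>E. m e \<in> carrier_mat (d (t e)) (d (s e))) \<and>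
     (\<forall>(b, a)\<in>I. m b * m a = 0\<^sub>m (d (t b)) (d (s a)))"

definition is_hom :: "'v set \<Rightarrow> 'e set \<Rightarrow> ('e \<Rightarrow> 'v) \<Rightarrow> ('e \<Rightarrow> 'v)
    \<Rightarrow> ('v \<Rightarrow> nat) \<Rightarrow> ('e \<Rightarrow> 'a::field mat) \<Rightarrow> ('v \<Rightarrow> nat) \<Rightarrow> ('e \<Rightarrow> 'a mat)
    \<Rightarrow> ('v \<Rightarrow> 'a mat) \<Rightarrow> bool" where
  "is_hom V E s t d m d' m' f \<longleftrightarrow>
     (\<forall>i\<in>V. f i \<in> carrier_mat (d' i) (d i)) \<and>
     (\<forall>e\<in>E. f (t e) * m e = m' e * f (s e))"

definition mat_surj :: "'a::field mat \<Rightarrow> bool" where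
  "mat_surj A \<longleftrightarrow> (\<forall>y\<in>carrier_vec (dim_row A). \<exists>x\<in>carrier_vec (dim_col A). A *\<^sub>v x = y)"

definition mat_inj :: "'a::field mat \<Rightarrow> bool" where
  "mat_inj A \<longleftrightarrow> (\<forall>x\<in>carrier_vec (dim_col A). A *\<^sub>v x = 0\<^sub>v (dim_row A) \<longrightarrow> x = 0\<^sub>v (dim_col A))"

text \<open>Projective / injective objects of the category of (finite dimensional)
  representations of the bound quiver; epimorphisms/monomorphisms there are the
  pointwise surjective/injective morphisms.\<close>

definition projective_rep :: "'v set \<Rightarrow> 'e set \<Rightarrow> ('e \<Rightarrow> 'v) \<Rightarrow> ('e \<Rightarrow> 'v) \<Rightarrow> ('e \<times> 'e) set
    \<Rightarrow> ('v \<Rightarrow> nat) \<Rightarrow> ('e \<Rightarrow> 'a::field mat) \<Rightarrow> bool" where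
  "projective_rep V E s t I d m \<longleftrightarrow> is_rep V E s t I d m \<and>
     (\<forall>(dM :: 'v \<Rightarrow> nat) (mM :: 'e \<Rightarrow> 'a mat) dN mN g h.
        is_rep V E s t I dM mM \<longrightarrow> is_rep V E s t I dN mN \<longrightarrow>
        is_hom V E s t dM mM dN mN g \<longrightarrow> (\<forall>i\<in>V. mat_surj (g i)) \<longrightarrow>
        is_hom V E s t d m dN mN h \<longrightarrow>
        (\<exists>k. is_hom V E s t d m dM mM k \<and> (\<forall>i\<in>V. g i * k i = h i)))"

definition injective_rep :: "'v set \<Rightarrow> 'e set \<Rightarrow> ('e \<Rightarrow> 'v) \<Rightarrow> ('e \<Rightarrow> 'v) \<Rightarrow> ('e \<times> 'e) set
    \<Rightarrow> ('v \<Rightarrow> nat) \<Rightarrow> ('e \<Rightarrow> 'a::field mat) \<Rightarrow> bool" where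
  "injective_rep V E s t I d m \<longleftrightarrow> is_rep V E s t I d m \<and>
     (\<forall>(dM :: 'v \<Rightarrow> nat) (mM :: 'e \<Rightarrow> 'a mat) dN mN g h.
        is_rep V E s t I dM mM \<longrightarrow> is_rep V E s t I dN mN \<longrightarrow>
        is_hom V E s t dM mM dN mN g \<longrightarrow> (\<forall>i\<in>V. mat_inj (g i)) \<longrightarrow>
        is_hom V E s t dM mM d m h \<longrightarrow>
        (\<exists>k. is_hom V E s t dN mN d m k \<and> (\<forall>i\<in>V. k i * g i = h i)))"

text \<open>Gentle algebras. Paths are lists of arrows in the order they are traversed.\<close>

definition nonzero_path :: "'e set \<Rightarrow> ('e \<Rightarrow> 'v) \<Rightarrow> ('e \<Rightarrow> 'v) \<Rightarrow> ('e \<times> 'e) set \<Rightarrow> 'e list \<Rightarrow> bool" where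
  "nonzero_path E s t I xs \<longleftrightarrow> set xs \<subseteq> E \<and>
     (\<forall>i. Suc i < length xs \<longrightarrow> t (xs ! i) = s (xs ! Suc i) \<and> (xs ! Suc i, xs ! i) \<notin> I)"

definition gentle :: "'v set \<Rightarrow> 'e set \<Rightarrow> ('e \<Rightarrow> 'v) \<Rightarrow> ('e \<Rightarrow> 'v) \<Rightarrow> ('e \<times> 'e) set \<Rightarrow> bool" where
  "gentle V E s t I \<longleftrightarrow>
     finite V \<and> finite E \<and> (\<forall>e\<in>E. s e \<in> V \<and> t e \<in> V) \<and>
     (\<forall>(b, a)\<in>I. a \<in> E \<and> b \<in> E \<and> t a = s b) \<and>
     (\<forall>i\<in>V. card {a\<in>E. s a = i} \<le> 2 \<and> card {a\<in>E. t a = i} \<le> 2) \<and>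
     (\<forall>a\<in>E.
        card {b\<in>E. t b = s a \<and> (a, b) \<notin> I} \<le> 1 \<and>
        card {c\<in>E. s c = t a \<and> (c, a) \<notin> I} \<le> 1 \<and>
        card {b\<in>E. t b = s a \<and> (a, b) \<in> I} \<le> 1 \<and>
        card {c\<in>E. s c = t a \<and> (c, a) \<in> I} \<le> 1) \<and>
     (\<exists>N. \<forall>xs. nonzero_path E s t I xs \<longrightarrow> length xs \<le> N)"

text \<open>Arrows lying on a repetition-free cycle alpha_1 ... alpha_n with all
  alpha_i alpha_(i+1) in I (indices mod n). The list xs is the cycle in
  traversal order, i.e. xs = [alpha_n, ..., alpha_1].\<close>

definition cyc_arrow :: "'e set \<Rightarrow> ('e \<Rightarrow> 'v) \<Rightarrow> ('e \<Rightarrow> 'v) \<Rightarrow> ('e \<times> 'e) set \<Rightarrow> 'e \<Rightarrow> bool" where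
  "cyc_arrow E s t I \<alpha> \<longleftrightarrow> (\<exists>xs. xs \<noteq> [] \<and> distinct xs \<and> set xs \<subseteq> E \<and> \<alpha> \<in> set xs \<and>
     (\<forall>i<length xs. t (xs ! i) = s (xs ! (Suc i mod length xs)) \<and>
                    (xs ! (Suc i mod length xs), xs ! i) \<in> I))"

definition cyc_arrows :: "'e set \<Rightarrow> ('e \<Rightarrow> 'v) \<Rightarrow> ('e \<Rightarrow> 'v) \<Rightarrow> ('e \<times> 'e) set \<Rightarrow> 'e set" where
  "cyc_arrows E s t I = {a\<in>E. cyc_arrow E s t I a}"

datatype ('v, 'e) aus_vert = QV 'v | AV 'e
datatype 'e aus_arr = NA 'e | PA 'e | MA 'e

fun aus_s :: "('e \<Rightarrow> 'v) \<Rightarrow> 'e aus_arr \<Rightarrow> ('v, 'e) aus_vert" where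
  "aus_s s (NA e) = QV (s e)"
| "aus_s s (PA e) = QV (s e)"
| "aus_s s (MA e) = AV e"

fun aus_t :: "('e \<Rightarrow> 'v) \<Rightarrow> 'e aus_arr \<Rightarrow> ('v, 'e) aus_vert" where
  "aus_t t (NA e) = QV (t e)"
| "aus_t t (PA e) = AV e"
| "aus_t t (MA e) = QV (t e)"

definition aus_V :: "'v set \<Rightarrow> 'e set \<Rightarrow> ('e \<Rightarrow> 'v) \<Rightarrow> ('e \<Rightarrow> 'v) \<Rightarrow> ('e \<times> 'e) set
    \<Rightarrow> ('v, 'e) aus_vert set" where
  "aus_V V E s t I = QV ` V \<union> AV ` cyc_arrows E s t I"

definition aus_E :: "'e set \<Rightarrow> ('e \<Rightarrow> 'v) \<Rightarrow> ('e \<Rightarrow> 'v) \<Rightarrow> ('e \<times> 'e) set \<Rightarrow> 'e aus_arr set" where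
  "aus_E E s t I = NA ` (E - cyc_arrows E s t I) \<union> PA ` cyc_arrows E s t I \<union> MA ` cyc_arrows E s t I"

definition aus_I :: "'e set \<Rightarrow> ('e \<Rightarrow> 'v) \<Rightarrow> ('e \<Rightarrow> 'v) \<Rightarrow> ('e \<times> 'e) set
    \<Rightarrow> ('e aus_arr \<times> 'e aus_arr) set" where
  "aus_I E s t I =
     {(PA b, MA a) | a b. (b, a) \<in> I \<and> a \<in> cyc_arrows E s t I \<and> b \<in> cyc_arrows E s t I} \<union>
     {(NA b, NA a) | a b. (b, a) \<in> I \<and> a \<in> E - cyc_arrows E s t I \<and> b \<in> E - cyc_arrows E s t I}"

text \<open>(d', m') is (a representative of the isomorphism class of) Phi(d, m):
  same spaces at old vertices, the image of M_alpha at the vertex alpha,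
  M_alpha factored as the surjection m'(PA alpha) followed by the injection m'(MA alpha).\<close>

definition is_Phi_image :: "'v set \<Rightarrow> 'e set \<Rightarrow> ('e \<Rightarrow> 'v) \<Rightarrow> ('e \<Rightarrow> 'v) \<Rightarrow> ('e \<times> 'e) set
    \<Rightarrow> ('v \<Rightarrow> nat) \<Rightarrow> ('e \<Rightarrow> 'a::field mat)
    \<Rightarrow> (('v, 'e) aus_vert \<Rightarrow> nat) \<Rightarrow> ('e aus_arr \<Rightarrow> 'a mat) \<Rightarrow> bool" where
  "is_Phi_image V E s t I d m d' m' \<longleftrightarrow>
     (\<forall>i\<in>V. d' (QV i) = d i) \<and>
     (\<forall>b\<in>E - cyc_arrows E s t I. m' (NA b) = m b) \<and>
     (\<forall>a\<in>cyc_arrows E s t I.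
        m' (PA a) \<in> carrier_mat (d' (AV a)) (d (s a)) \<and>
        m' (MA a) \<in> carrier_mat (d (t a)) (d' (AV a)) \<and>
        mat_surj (m' (PA a)) \<and> mat_inj (m' (MA a)) \<and>
        m' (MA a) * m' (PA a) = m a)"

end

theory Submission
  imports Defs "Jordan_Normal_Form.Matrix_Kernel"
begin

text \<open>Restriction of scalars along the embedding of \<open>\<Lambda>\<close> into \<open>\<Gamma>\<close> recovers M from \<open>\<Phi>(M)\<close>, and a
  morphism out of (into) \<open>\<Phi>(M)\<close> is determined by its restriction, because \<open>\<Phi>(M)\<^sub>\<alpha>\<^sub>+\<close> is
  surjective (\<open>\<Phi>(M)\<^sub>\<alpha>\<^sub>-\<close> is injective). So a morphism to be lifted through \<open>\<Phi>(P)\<close> is first lifted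
  over \<open>\<Lambda>\<close>, using that P is projective, and the lift is then extended across every new vertex
  \<open>\<alpha>\<close>. The extension exists because the lift kills \<open>ker P\<^sub>\<alpha> \<subseteq> im P\<^sub>\<gamma>\<close> for the arrow \<open>\<gamma>\<close> with
  \<open>\<alpha>\<gamma> \<in> I\<close>, as \<open>\<alpha>\<^sup>+\<gamma>\<^sup>- = 0\<close> in \<open>\<Gamma>\<close>. The inclusion \<open>ker P\<^sub>\<alpha> \<subseteq> im P\<^sub>\<gamma>\<close> holds for the free
  representation spanned by the nonzero paths, hence for its retract P. Injective
  representations are treated dually.\<close>

section \<open>Matrices\<close>

lemma minus_eq_zero_vecD:
  "(u :: 'a::ab_group_add vec) \<in> carrier_vec n \<Longrightarrow> w \<in> carrier_vec n \<Longrightarrow> u - w = 0\<^sub>v n \<Longrightarrow> u = w"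
  by (metis (no_types, lifting) ext comm_add_vec minus_add_minus_vec
    minus_cancel_vec uminus_eq_vec zero_minus_vec)

lemma mult_unit_vec_eq_col:
  "(A :: 'a::field mat) \<in> carrier_mat n m \<Longrightarrow> j < m \<Longrightarrow> A *\<^sub>v unit_vec m j = col A j"
  by (rule eq_vecI) (auto simp: index_row)

lemma mat_eq_by_mult_vecI:
  fixes A :: "'a::field mat"
  assumes A: "A \<in> carrier_mat n m" and B: "B \<in> carrier_mat n m"
    and eq: "\<And>v. v \<in> carrier_vec m \<Longrightarrow> A *\<^sub>v v = B *\<^sub>v v"
  shows "A = B"
proof (rule mat_col_eqI)
  fix j assume "j < dim_col B"
  hence j: "j < m" using B by simp
  have "col A j = A *\<^sub>v unit_vec m j" using mult_unit_vec_eq_col[OF A j] by simp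
  also have "\<dots> = B *\<^sub>v unit_vec m j" by (rule eq) simp
  also have "\<dots> = col B j" using mult_unit_vec_eq_col[OF B j] .
  finally show "col A j = col B j" .
qed (use A B in simp_all)

lemma mat_factor_through_image:
  fixes A :: "'a::field mat"
  assumes A: "A \<in> carrier_mat n m" and B: "B \<in> carrier_mat n k"
    and im: "\<And>y. y \<in> carrier_vec k \<Longrightarrow> \<exists>x\<in>carrier_vec m. A *\<^sub>v x = B *\<^sub>v y"
  shows "\<exists>C \<in> carrier_mat m k. A * C = B"
proof -
  define x where "x j = (SOME x. x \<in> carrier_vec m \<and> A *\<^sub>v x = B *\<^sub>v unit_vec k j)" for j
  have x: "x j \<in> carrier_vec m \<and> A *\<^sub>v x j = B *\<^sub>v unit_vec k j" for j
  proof -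
    have "\<exists>x. x \<in> carrier_vec m \<and> A *\<^sub>v x = B *\<^sub>v unit_vec k j"
      using im[of "unit_vec k j"] by auto
    thus ?thesis unfolding x_def by (rule someI_ex)
  qed
  define C where "C = mat_of_cols m (map x [0..<k])"
  have C: "C \<in> carrier_mat m k" unfolding C_def using mat_of_cols_carrier(1)[of m "map x [0..<k]"] by simp
  have "A * C = B"
  proof (rule mat_col_eqI)
    fix j assume "j < dim_col B"
    hence j: "j < k" using B by simp
    have "col (A * C) j = A *\<^sub>v col C j" by (rule col_mult2[OF A C j])
    also have "\<dots> = A *\<^sub>v x j" using j x[of j] by (simp add: C_def)
    also have "\<dots> = B *\<^sub>v unit_vec k j" using x[of j] by simp
    also have "\<dots> = col B j" using mult_unit_vec_eq_col[OF B j] .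
    finally show "col (A * C) j = col B j" .
  qed (use A B C in simp_all)
  thus ?thesis using C by blast
qed

lemma mat_surj_right_inverse:
  fixes A :: "'a::field mat"
  assumes A: "A \<in> carrier_mat n m" and su: "mat_surj A"
  shows "\<exists>S \<in> carrier_mat m n. A * S = 1\<^sub>m n"
  using su A by (intro mat_factor_through_image[OF A]) (auto simp: mat_surj_def)

lemma mat_surj_cancel_right:
  fixes A :: "'a::field mat"
  assumes A: "A \<in> carrier_mat n m" and su: "mat_surj A"
    and X: "X \<in> carrier_mat k n" and Y: "Y \<in> carrier_mat k n"
    and eq: "X * A = Y * A"
  shows "X = Y"
proof -
  obtain S where S: "S \<in> carrier_mat m n" and AS: "A * S = 1\<^sub>m n"
    using mat_surj_right_inverse[OF A su] by blast
  have "X = (X * A) * S" using X A S AS by (simp add: assoc_mult_mat[of X k n A m S n])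
  also have "\<dots> = Y" using Y A S AS eq by (simp add: assoc_mult_mat[of Y k n A m S n])
  finally show ?thesis .
qed

lemma mat_inj_cancel_left:
  fixes A :: "'a::field mat"
  assumes A: "A \<in> carrier_mat n m" and inj: "mat_inj A"
    and X: "X \<in> carrier_mat m k" and Y: "Y \<in> carrier_mat m k"
    and eq: "A * X = A * Y"
  shows "X = Y"
proof (rule mat_eq_by_mult_vecI[OF X Y])
  fix v :: "'a vec" assume v: "v \<in> carrier_vec k"
  have Xv: "X *\<^sub>v v \<in> carrier_vec m" and Yv: "Y *\<^sub>v v \<in> carrier_vec m" using X Y v by auto
  have "A *\<^sub>v (X *\<^sub>v v - Y *\<^sub>v v) = (A * X) *\<^sub>v v - (A * Y) *\<^sub>v v"
    using A X Y v by (simp add: mult_minus_distrib_mat_vec assoc_mult_mat_vec)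
  hence "A *\<^sub>v (X *\<^sub>v v - Y *\<^sub>v v) = 0\<^sub>v n" using eq A Y v by simp
  hence "X *\<^sub>v v - Y *\<^sub>v v = 0\<^sub>v m" using inj A Xv Yv unfolding mat_inj_def by simp
  thus "X *\<^sub>v v = Y *\<^sub>v v" using Xv Yv by (rule minus_eq_zero_vecD[rotated 2])
qed

lemma mat_factor_through_surj:
  fixes A :: "'a::field mat"
  assumes A: "A \<in> carrier_mat n m" and su: "mat_surj A" and B: "B \<in> carrier_mat k m"
    and ker: "mat_kernel A \<subseteq> mat_kernel B"
  shows "\<exists>C \<in> carrier_mat k n. C * A = B"
proof -
  obtain S where S: "S \<in> carrier_mat m n" and AS: "A * S = 1\<^sub>m n"
    using mat_surj_right_inverse[OF A su] by blast
  have "B * S * A = B"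
  proof (rule mat_eq_by_mult_vecI[of _ k m])
    fix v :: "'a vec" assume v: "v \<in> carrier_vec m"
    define w where "w = S *\<^sub>v (A *\<^sub>v v) - v"
    have w: "w \<in> carrier_vec m" using S A v by (simp add: w_def)
    have "A *\<^sub>v w = (A * S) *\<^sub>v (A *\<^sub>v v) - A *\<^sub>v v"
      using A S v by (simp add: w_def mult_minus_distrib_mat_vec assoc_mult_mat_vec)
    hence "w \<in> mat_kernel A" using AS A v w by (auto intro!: mat_kernelI)
    hence "B *\<^sub>v w = 0\<^sub>v k" using ker B by (auto dest: mat_kernelD)
    moreover have "B *\<^sub>v w = B *\<^sub>v (S *\<^sub>v (A *\<^sub>v v)) - B *\<^sub>v v"
      unfolding w_def using A B S v by (intro mult_minus_distrib_mat_vec) auto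
    ultimately have BSAv: "B *\<^sub>v (S *\<^sub>v (A *\<^sub>v v)) = B *\<^sub>v v"
      using minus_eq_zero_vecD[of "B *\<^sub>v (S *\<^sub>v (A *\<^sub>v v))" k "B *\<^sub>v v"] A B S v by auto
    have "(B * S * A) *\<^sub>v v = (B * S) *\<^sub>v (A *\<^sub>v v)"
      by (rule assoc_mult_mat_vec[of "B * S" k n A m v]) (use A B S v in auto)
    also have "\<dots> = B *\<^sub>v (S *\<^sub>v (A *\<^sub>v v))"
      by (rule assoc_mult_mat_vec[of B k m S n]) (use A B S v in auto)
    finally show "(B * S * A) *\<^sub>v v = B *\<^sub>v v" using BSAv by simp
  qed (use A B S mult_carrier_mat in blast)+
  moreover have "B * S \<in> carrier_mat k n" using B S by simp
  ultimately show ?thesis by blast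
qed

lemma mult_mat_vec_zero [simp]: "(A :: 'a::field mat) \<in> carrier_mat n m \<Longrightarrow> A *\<^sub>v 0\<^sub>v m = 0\<^sub>v n"
  by (rule eq_vecI) (auto simp: scalar_prod_def)

lemma zero_mat_mult_vec [simp]: "v \<in> carrier_vec m \<Longrightarrow> (0\<^sub>m n m :: 'a::field mat) *\<^sub>v v = 0\<^sub>v n"
  by (rule eq_vecI) (auto simp: scalar_prod_def)

lemma mult_mat_zero_middle:
  fixes A :: "'a::semiring_1 mat"
  assumes "A \<in> carrier_mat n1 n2" "B \<in> carrier_mat n2 n3" "C \<in> carrier_mat n3 n4" "D \<in> carrier_mat n4 n5"
    and "B * C = 0\<^sub>m n2 n4"
  shows "A * B * (C * D) = 0\<^sub>m n1 n5"
proof -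
  have "A * B * (C * D) = A * (B * (C * D))" using assms(1-4) by (intro assoc_mult_mat) auto
  also have "\<dots> = A * ((B * C) * D)" using assms(2-4) by (simp add: assoc_mult_mat)
  finally show ?thesis using assms by simp
qed

lemma mult_mat_of_cols:
  assumes A: "A \<in> carrier_mat k n" and vs: "\<And>v. v \<in> set vs \<Longrightarrow> v \<in> carrier_vec n"
  shows "A * mat_of_cols n vs = mat_of_cols k (map (\<lambda>v. A *\<^sub>v v) vs)"
proof (rule mat_col_eqI)
  fix c assume "c < dim_col (mat_of_cols k (map (\<lambda>v. A *\<^sub>v v) vs))"
  hence c: "c < length vs" by simp
  have "vs ! c \<in> carrier_vec n" using vs c by simp
  thus "col (A * mat_of_cols n vs) c = col (mat_of_cols k (map (\<lambda>v. A *\<^sub>v v) vs)) c"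
    using col_mult2[OF A mat_of_cols_carrier(1) c] c A by simp
qed (use A in simp_all)

lemma row_mult_eq_transpose_mult_vec:
  assumes "A \<in> carrier_mat n k" "B \<in> carrier_mat k l" "i < n"
  shows "row (A * B) i = transpose_mat B *\<^sub>v row (A :: 'a::comm_semiring_0 mat) i"
  using assms by (auto intro!: eq_vecI comm_scalar_prod[of _ k])

definition kernel_in_image :: "'a::field mat \<Rightarrow> 'a mat \<Rightarrow> bool" where
  "kernel_in_image A B \<longleftrightarrow> mat_kernel A \<subseteq> (\<lambda>y. B *\<^sub>v y) ` carrier_vec (dim_col B)"

lemma kernel_in_imageI:
  assumes "\<And>x. x \<in> carrier_vec (dim_col A) \<Longrightarrow> A *\<^sub>v x = 0\<^sub>v (dim_row A) \<Longrightarrow>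
      \<exists>y\<in>carrier_vec (dim_col B). B *\<^sub>v y = x"
  shows "kernel_in_image A B"
  using assms unfolding kernel_in_image_def mat_kernel_def by fastforce

lemma kernel_in_imageD:
  assumes "kernel_in_image A B" "x \<in> carrier_vec (dim_col A)" "A *\<^sub>v x = 0\<^sub>v (dim_row A)"
  shows "\<exists>y\<in>carrier_vec (dim_col B). B *\<^sub>v y = x"
  using assms unfolding kernel_in_image_def mat_kernel_def by fastforce

lemma kernel_in_image_retract:
  fixes A :: "'a::field mat"
  assumes A: "A \<in> carrier_mat n2 n1" and B: "B \<in> carrier_mat n1 n0"
    and A': "A' \<in> carrier_mat N2 N1" and B': "B' \<in> carrier_mat N1 N0"
    and k1: "k1 \<in> carrier_mat N1 n1" and k2: "k2 \<in> carrier_mat N2 n2"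
    and g0: "g0 \<in> carrier_mat n0 N0" and g1: "g1 \<in> carrier_mat n1 N1"
    and retract: "g1 * k1 = 1\<^sub>m n1" and k: "k2 * A = A' * k1" and g: "g1 * B' = B * g0"
    and exact: "kernel_in_image A' B'"
  shows "kernel_in_image A B"
proof (rule kernel_in_imageI)
  fix x assume "x \<in> carrier_vec (dim_col A)" and "A *\<^sub>v x = 0\<^sub>v (dim_row A)"
  hence x: "x \<in> carrier_vec n1" and Ax: "A *\<^sub>v x = 0\<^sub>v n2" using A by auto
  have "A' *\<^sub>v (k1 *\<^sub>v x) = k2 *\<^sub>v (A *\<^sub>v x)"
    using A A' k1 k2 x k by (metis assoc_mult_mat_vec)
  hence "A' *\<^sub>v (k1 *\<^sub>v x) = 0\<^sub>v (dim_row A')" using Ax k2 A' by simp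
  moreover have "k1 *\<^sub>v x \<in> carrier_vec (dim_col A')" using k1 x A' by simp
  ultimately obtain y where "y \<in> carrier_vec (dim_col B')" and B'y: "B' *\<^sub>v y = k1 *\<^sub>v x"
    using kernel_in_imageD[OF exact] by blast
  hence y: "y \<in> carrier_vec N0" using B' by simp
  have "B *\<^sub>v (g0 *\<^sub>v y) = g1 *\<^sub>v (B' *\<^sub>v y)"
    using B B' g0 g1 y g by (metis assoc_mult_mat_vec)
  also have "\<dots> = (g1 * k1) *\<^sub>v x" using B'y g1 k1 x by (simp add: assoc_mult_mat_vec)
  also have "\<dots> = x" using retract x by simp
  finally show "\<exists>y\<in>carrier_vec (dim_col B). B *\<^sub>v y = x"
    using g0 y B by (intro bexI[of _ "g0 *\<^sub>v y"]) auto
qed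

lemma mat_surj_if_unit_cols:
  fixes A :: "'a::field mat"
  assumes A: "A \<in> carrier_mat n m" and units: "\<And>c. c < n \<Longrightarrow> \<exists>j<m. col A j = unit_vec n c"
  shows "mat_surj A"
proof -
  obtain S where S: "S \<in> carrier_mat m n" and AS: "A * S = 1\<^sub>m n"
  proof -
    define j where "j c = (SOME j. j < m \<and> col A j = unit_vec n c)" for c
    have j: "j c < m \<and> col A (j c) = unit_vec n c" if "c < n" for c
      unfolding j_def using units[OF that] by (rule someI_ex)
    define S :: "'a mat" where "S = mat_of_cols m (map (\<lambda>c. unit_vec m (j c)) [0..<n])"
    have S: "S \<in> carrier_mat m n" unfolding S_def
      using mat_of_cols_carrier(1)[of m "map (\<lambda>c. unit_vec m (j c)) [0..<n]"] by simp
    have "A * S = 1\<^sub>m n"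
    proof (rule mat_col_eqI)
      fix c assume "c < dim_col (1\<^sub>m n :: 'a mat)"
      hence c: "c < n" by simp
      have "col (A * S) c = A *\<^sub>v col S c" by (rule col_mult2[OF A S c])
      also have "\<dots> = A *\<^sub>v unit_vec m (j c)" using c by (simp add: S_def)
      also have "\<dots> = col (1\<^sub>m n) c" using mult_unit_vec_eq_col[OF A] j[OF c] c by simp
      finally show "col (A * S) c = col (1\<^sub>m n) c" .
    qed (use A S in simp_all)
    thus thesis using S that by blast
  qed
  show ?thesis unfolding mat_surj_def
  proof
    fix y :: "'a vec" assume "y \<in> carrier_vec (dim_row A)"
    hence y: "y \<in> carrier_vec n" using A by simp
    have "A *\<^sub>v (S *\<^sub>v y) = y" using A S y AS by (simp flip: assoc_mult_mat_vec)
    thus "\<exists>x\<in>carrier_vec (dim_col A). A *\<^sub>v x = y" using A S y by (intro bexI[of _ "S *\<^sub>v y"]) auto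
  qed
qed

lemma mat_inj_if_unit_rows:
  fixes A :: "'a::field mat"
  assumes A: "A \<in> carrier_mat n m" and units: "\<And>c. c < m \<Longrightarrow> \<exists>r<n. row A r = unit_vec m c"
  shows "mat_inj A"
  unfolding mat_inj_def
proof (intro ballI impI)
  fix x :: "'a vec" assume "x \<in> carrier_vec (dim_col A)" and "A *\<^sub>v x = 0\<^sub>v (dim_row A)"
  hence x: "x \<in> carrier_vec m" and Ax: "A *\<^sub>v x = 0\<^sub>v n" using A by auto
  show "x = 0\<^sub>v (dim_col A)"
  proof (rule eq_vecI)
    fix c assume "c < dim_vec (0\<^sub>v (dim_col A) :: 'a vec)"
    hence c: "c < m" using A by simp
    then obtain r where r: "r < n" "row A r = unit_vec m c" using units by blast
    have "x $ c = row A r \<bullet> x" using r(2) x c by simp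
    also have "\<dots> = (A *\<^sub>v x) $ r" using r A by simp
    finally show "x $ c = 0\<^sub>v (dim_col A) $ c" using Ax r c A by simp
  qed (use x A in simp)
qed

section \<open>Matrices of maps between enumerated bases\<close>

definition index_of :: "'b list \<Rightarrow> 'b \<Rightarrow> nat" where
  "index_of xs x = (THE r. r < length xs \<and> xs ! r = x)"

lemma index_of:
  assumes "distinct xs" "x \<in> set xs"
  shows "index_of xs x < length xs" "xs ! index_of xs x = x"
  using theI'[OF distinct_Ex1[OF assms]] unfolding index_of_def by auto

lemma index_of_nth: "distinct xs \<Longrightarrow> r < length xs \<Longrightarrow> index_of xs (xs ! r) = r"
  using index_of[of xs "xs ! r"] nth_eq_iff_index_eq by fastforce

definition basis_map_mat :: "('b \<Rightarrow> 'c) \<Rightarrow> 'b list \<Rightarrow> 'c list \<Rightarrow> 'a::zero_neq_one mat" where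
  "basis_map_mat f xs ys = mat (length ys) (length xs) (\<lambda>(r, c). if ys ! r = f (xs ! c) then 1 else 0)"

lemma basis_map_mat_carrier [simp]:
  "basis_map_mat f xs ys \<in> carrier_mat (length ys) (length xs)"
  "dim_row (basis_map_mat f xs ys) = length ys" "dim_col (basis_map_mat f xs ys) = length xs"
  unfolding basis_map_mat_def by simp_all

lemma col_basis_map_mat:
  assumes "distinct ys" "c < length xs"
  shows "col (basis_map_mat f xs ys :: 'a::field mat) c =
    (if f (xs ! c) \<in> set ys then unit_vec (length ys) (index_of ys (f (xs ! c))) else 0\<^sub>v (length ys))"
proof (rule eq_vecI)
  fix r assume "r < dim_vec (if f (xs ! c) \<in> set ys then unit_vec (length ys) (index_of ys (f (xs ! c)))
    else (0\<^sub>v (length ys) :: 'a vec))"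
  hence r: "r < length ys" by (simp split: if_splits)
  have "ys ! r = f (xs ! c) \<longleftrightarrow> f (xs ! c) \<in> set ys \<and> r = index_of ys (f (xs ! c))"
    using index_of[OF assms(1)] index_of_nth[OF assms(1) r] r nth_mem by metis
  thus "col (basis_map_mat f xs ys) c $ r = (if f (xs ! c) \<in> set ys
    then unit_vec (length ys) (index_of ys (f (xs ! c))) else 0\<^sub>v (length ys)) $ r"
    using r assms(2) by (auto simp: basis_map_mat_def unit_vec_def)
qed (use assms in \<open>simp add: basis_map_mat_def\<close>)

lemma row_basis_map_mat:
  "r < length ys \<Longrightarrow>
    row (basis_map_mat f xs ys) r = vec (length xs) (\<lambda>c. if ys ! r = f (xs ! c) then 1 else 0)"
  unfolding basis_map_mat_def by (rule eq_vecI) auto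

lemma basis_map_mat_mult_vec_image:
  assumes "distinct xs" "inj_on f (set xs)" "r < length ys" "c < length xs" "ys ! r = f (xs ! c)"
    and v: "v \<in> carrier_vec (length xs)"
  shows "(basis_map_mat f xs ys *\<^sub>v v) $ r = (v $ c :: 'a::field)"
proof -
  have "ys ! r = f (xs ! c') \<longleftrightarrow> c' = c" if "c' < length xs" for c'
    using assms that inj_on_eq_iff[OF assms(2)] nth_eq_iff_index_eq[OF assms(1)] by (metis nth_mem)
  hence "row (basis_map_mat f xs ys :: 'a mat) r = unit_vec (length xs) c"
    using assms(3) by (auto simp: row_basis_map_mat unit_vec_def)
  thus ?thesis using assms(3,4) v by simp
qed

lemma basis_map_mat_mult_vec_not_image:
  assumes "r < length ys" "ys ! r \<notin> f ` set xs" and v: "v \<in> carrier_vec (length xs)"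
  shows "(basis_map_mat f xs ys *\<^sub>v v) $ r = (0 :: 'a::field)"
proof -
  have "row (basis_map_mat f xs ys :: 'a mat) r = 0\<^sub>v (length xs)"
    using assms(1,2) by (auto simp: row_basis_map_mat intro!: eq_vecI)
  thus ?thesis using assms(1) v by simp
qed

lemma transpose_basis_map_mat_mult_vec:
  assumes "distinct ys" "c < length xs" and v: "v \<in> carrier_vec (length ys)"
  shows "(transpose_mat (basis_map_mat f xs ys) *\<^sub>v v) $ c =
    (if f (xs ! c) \<in> set ys then v $ index_of ys (f (xs ! c)) else (0 :: 'a::field))"
  using assms index_of[OF assms(1)] by (simp add: col_basis_map_mat)

lemma basis_map_mat_mult_eq_0:
  assumes "distinct ys" "distinct zs" and vanish: "\<And>x. x \<in> set xs \<Longrightarrow> f x \<in> set ys \<Longrightarrow> g (f x) \<notin> set zs"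
  shows "basis_map_mat g ys zs * basis_map_mat f xs ys = (0\<^sub>m (length zs) (length xs) :: 'a::field mat)"
proof (rule mat_col_eqI)
  fix c assume "c < dim_col (0\<^sub>m (length zs) (length xs) :: 'a mat)"
  hence c: "c < length xs" by simp
  have "col (basis_map_mat g ys zs * basis_map_mat f xs ys) c =
      (basis_map_mat g ys zs :: 'a mat) *\<^sub>v col (basis_map_mat f xs ys) c"
    by (rule col_mult2[OF basis_map_mat_carrier(1) basis_map_mat_carrier(1) c])
  also have "\<dots> = 0\<^sub>v (length zs)"
  proof (cases "f (xs ! c) \<in> set ys")
    case True
    let ?r = "index_of ys (f (xs ! c))"
    have r: "?r < length ys" "ys ! ?r = f (xs ! c)" using index_of[OF assms(1) True] by auto
    have "(basis_map_mat g ys zs :: 'a mat) *\<^sub>v col (basis_map_mat f xs ys) c = col (basis_map_mat g ys zs) ?r"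
      using True c r by (simp add: col_basis_map_mat[OF assms(1)] mult_unit_vec_eq_col[OF basis_map_mat_carrier(1)])
    also have "\<dots> = 0\<^sub>v (length zs)"
      using r vanish[of "xs ! c"] True c by (simp add: col_basis_map_mat[OF assms(2)])
    finally show ?thesis .
  next
    case False
    thus ?thesis using c by (simp add: col_basis_map_mat[OF assms(1)])
  qed
  finally show "col (basis_map_mat g ys zs * basis_map_mat f xs ys :: 'a mat) c =
      col (0\<^sub>m (length zs) (length xs)) c"
    using c by simp
qed simp_all

lemma mat_of_cols_mult_basis_map_mat:
  assumes ys: "distinct ys" and \<phi>: "\<And>y. y \<in> set ys \<Longrightarrow> \<phi> y \<in> carrier_vec n"
  shows "mat_of_cols n (map \<phi> ys) * basis_map_mat f xs ys =
    mat_of_cols n (map (\<lambda>x. if f x \<in> set ys then \<phi> (f x) else 0\<^sub>v n) xs :: 'a::field vec list)"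
proof (rule mat_col_eqI)
  fix c assume "c < dim_col (mat_of_cols n (map (\<lambda>x. if f x \<in> set ys then \<phi> (f x) else 0\<^sub>v n) xs))"
  hence c: "c < length xs" by simp
  have M: "mat_of_cols n (map \<phi> ys) \<in> carrier_mat n (length ys)"
    using mat_of_cols_carrier(1)[of n "map \<phi> ys"] by simp
  have "col (mat_of_cols n (map \<phi> ys) * basis_map_mat f xs ys) c =
      mat_of_cols n (map \<phi> ys) *\<^sub>v col (basis_map_mat f xs ys) c"
    by (rule col_mult2[OF M basis_map_mat_carrier(1) c])
  also have "\<dots> = (if f (xs ! c) \<in> set ys then \<phi> (f (xs ! c)) else 0\<^sub>v n)"
  proof (cases "f (xs ! c) \<in> set ys")
    case True
    note r = index_of[OF ys True]
    have "mat_of_cols n (map \<phi> ys) *\<^sub>v unit_vec (length ys) (index_of ys (f (xs ! c))) =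
        col (mat_of_cols n (map \<phi> ys)) (index_of ys (f (xs ! c)))"
      using r by (intro mult_unit_vec_eq_col[OF M])
    thus ?thesis using True c r \<phi>[OF True] by (simp add: col_basis_map_mat[OF ys])
  qed (use c M in \<open>simp add: col_basis_map_mat[OF ys]\<close>)
  finally show "col (mat_of_cols n (map \<phi> ys) * basis_map_mat f xs ys) c =
      col (mat_of_cols n (map (\<lambda>x. if f x \<in> set ys then \<phi> (f x) else 0\<^sub>v n) xs)) c"
    using c \<phi> by simp
qed simp_all

lemma basis_map_mat_kernel_vanishes:
  assumes ys: "distinct ys" and zs: "distinct zs" and f: "inj_on f (set ys)"
    and x: "x \<in> carrier_vec (length ys)" and x0: "basis_map_mat f ys zs *\<^sub>v x = 0\<^sub>v (length zs)"
    and r: "r < length ys" and in_zs: "f (ys ! r) \<in> set zs"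
  shows "x $ r = (0 :: 'a::field)"
proof -
  note k = index_of[OF zs in_zs]
  have "x $ r = (basis_map_mat f ys zs *\<^sub>v x) $ index_of zs (f (ys ! r))"
    using basis_map_mat_mult_vec_image[OF ys f k(1) r k(2) x] by simp
  thus ?thesis using x0 k(1) by simp
qed

lemma transpose_basis_map_mat_kernel_vanishes:
  assumes ys: "distinct ys" and x: "x \<in> carrier_vec (length ys)"
    and x0: "transpose_mat (basis_map_mat f zs ys) *\<^sub>v x = 0\<^sub>v (length zs)"
    and r: "r < length ys" and in_image: "ys ! r \<in> f ` set zs"
  shows "x $ r = (0 :: 'a::field)"
proof -
  obtain k where k: "k < length zs" "ys ! r = f (zs ! k)" using in_image by (metis imageE in_set_conv_nth)
  have "x $ r = (transpose_mat (basis_map_mat f zs ys) *\<^sub>v x) $ k"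
    using transpose_basis_map_mat_mult_vec[OF ys k(1) x] k(2) index_of_nth[OF ys r] nth_mem[OF r]
    by simp
  thus ?thesis using x0 k(1) by simp
qed

lemma kernel_in_image_basis_map_mat:
  fixes f :: "'c \<Rightarrow> 'd" and g :: "'b \<Rightarrow> 'c"
  assumes xs: "distinct xs" and ys: "distinct ys" and zs: "distinct zs"
    and f: "inj_on f (set ys)" and g: "inj_on g (set xs)"
    and cover: "\<And>y. y \<in> set ys \<Longrightarrow> f y \<notin> set zs \<Longrightarrow> y \<in> g ` set xs"
  shows "kernel_in_image (basis_map_mat f ys zs :: 'a::field mat) (basis_map_mat g xs ys)"
proof (rule kernel_in_imageI)
  fix x :: "'a vec" assume "x \<in> carrier_vec (dim_col (basis_map_mat f ys zs :: 'a mat))"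
    and "basis_map_mat f ys zs *\<^sub>v x = 0\<^sub>v (dim_row (basis_map_mat f ys zs :: 'a mat))"
  hence x: "x \<in> carrier_vec (length ys)" and x0: "basis_map_mat f ys zs *\<^sub>v x = 0\<^sub>v (length zs)"
    by simp_all
  have x_vanishes: "x $ r = 0" if "r < length ys" "f (ys ! r) \<in> set zs" for r
    using basis_map_mat_kernel_vanishes[OF ys zs f x x0 that] .
  define w :: "'a vec" where
    "w = vec (length xs) (\<lambda>c. if g (xs ! c) \<in> set ys then x $ index_of ys (g (xs ! c)) else 0)"
  have w: "w \<in> carrier_vec (length xs)" unfolding w_def by simp
  have "basis_map_mat g xs ys *\<^sub>v w = x"
  proof (rule eq_vecI)
    fix r assume "r < dim_vec x"
    hence r: "r < length ys" using x by simp
    show "(basis_map_mat g xs ys *\<^sub>v w) $ r = x $ r"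
    proof (cases "ys ! r \<in> g ` set xs")
      case True
      then obtain c where c: "c < length xs" "ys ! r = g (xs ! c)" by (metis imageE in_set_conv_nth)
      have "(basis_map_mat g xs ys *\<^sub>v w) $ r = w $ c"
        by (rule basis_map_mat_mult_vec_image[OF xs g r c w])
      also have "\<dots> = x $ r" using c r nth_mem[OF r] index_of_nth[OF ys r] by (simp add: w_def)
      finally show ?thesis .
    next
      case False
      thus ?thesis using basis_map_mat_mult_vec_not_image[OF r False w] x_vanishes[OF r]
        cover[OF nth_mem[OF r]] by auto
    qed
  qed (use x in simp)
  thus "\<exists>y\<in>carrier_vec (dim_col (basis_map_mat g xs ys :: 'a mat)). basis_map_mat g xs ys *\<^sub>v y = x"
    using w by auto
qed

lemma kernel_in_image_transpose_basis_map_mat: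
  fixes f :: "'d \<Rightarrow> 'c" and g :: "'c \<Rightarrow> 'b"
  assumes xs: "distinct xs" and ys: "distinct ys" and g: "inj_on g (set ys)"
    and cover: "\<And>y. y \<in> set ys \<Longrightarrow> g y \<notin> set xs \<Longrightarrow> y \<in> f ` set zs"
  shows "kernel_in_image (transpose_mat (basis_map_mat f zs ys) :: 'a::field mat)
    (transpose_mat (basis_map_mat g ys xs))"
proof (rule kernel_in_imageI)
  fix x :: "'a vec"
  assume "x \<in> carrier_vec (dim_col (transpose_mat (basis_map_mat f zs ys) :: 'a mat))"
    and "transpose_mat (basis_map_mat f zs ys) *\<^sub>v x =
      0\<^sub>v (dim_row (transpose_mat (basis_map_mat f zs ys) :: 'a mat))"
  hence x: "x \<in> carrier_vec (length ys)"
    and x0: "transpose_mat (basis_map_mat f zs ys) *\<^sub>v x = 0\<^sub>v (length zs)" by simp_all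
  have x_vanishes: "x $ r = 0" if "r < length ys" "ys ! r \<in> f ` set zs" for r
    using transpose_basis_map_mat_kernel_vanishes[OF ys x x0 that] .
  define w :: "'a vec" where
    "w = vec (length xs) (\<lambda>c. if xs ! c \<in> g ` set ys
      then x $ index_of ys (the_inv_into (set ys) g (xs ! c)) else 0)"
  have w: "w \<in> carrier_vec (length xs)" unfolding w_def by simp
  have "transpose_mat (basis_map_mat g ys xs) *\<^sub>v w = x"
  proof (rule eq_vecI)
    fix r assume "r < dim_vec x"
    hence r: "r < length ys" using x by simp
    show "(transpose_mat (basis_map_mat g ys xs) *\<^sub>v w) $ r = x $ r"
    proof (cases "g (ys ! r) \<in> set xs")
      case True
      note c = index_of[OF xs True]
      have "the_inv_into (set ys) g (g (ys ! r)) = ys ! r"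
        using the_inv_into_f_f[OF g nth_mem[OF r]] .
      thus ?thesis using transpose_basis_map_mat_mult_vec[OF xs r w] True c r nth_mem[OF r]
        index_of_nth[OF ys r] by (simp add: w_def)
    next
      case False
      thus ?thesis using transpose_basis_map_mat_mult_vec[OF xs r w] x_vanishes[OF r]
        cover[OF nth_mem[OF r]] by auto
    qed
  qed (use x in simp)
  thus "\<exists>y\<in>carrier_vec (dim_col (transpose_mat (basis_map_mat g ys xs) :: 'a mat)).
      transpose_mat (basis_map_mat g ys xs) *\<^sub>v y = x"
    using w by auto
qed

definition distinct_list_of :: "'b set \<Rightarrow> 'b list" where
  "distinct_list_of A = (SOME xs. distinct xs \<and> set xs = A)"

lemma distinct_list_of:
  assumes "finite A"
  shows "distinct (distinct_list_of A)" "set (distinct_list_of A) = A"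
proof -
  have "\<exists>xs. distinct xs \<and> set xs = A" using finite_distinct_list[OF assms] by blast
  hence "distinct (distinct_list_of A) \<and> set (distinct_list_of A) = A"
    unfolding distinct_list_of_def by (rule someI_ex)
  thus "distinct (distinct_list_of A)" "set (distinct_list_of A) = A" by simp_all
qed

section \<open>Gentle quivers\<close>

lemma gentle_relD:
  "gentle V E s t I \<Longrightarrow> (b, a) \<in> I \<Longrightarrow> a \<in> E \<and> b \<in> E \<and> t a = s b"
  unfolding gentle_def by fast

lemma gentle_arrowD: "gentle V E s t I \<Longrightarrow> e \<in> E \<Longrightarrow> s e \<in> V \<and> t e \<in> V"
  unfolding gentle_def by fast

lemma card_le_1_eqI: "finite A \<Longrightarrow> card A \<le> 1 \<Longrightarrow> x \<in> A \<Longrightarrow> y \<in> A \<Longrightarrow> x = y"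
  using card_le_Suc0_iff_eq by (metis One_nat_def)

lemma gentle_rel_pred_unique:
  assumes g: "gentle V E s t I" and "(a, b) \<in> I" "(a, b') \<in> I"
  shows "b = b'"
proof (rule card_le_1_eqI)
  show "finite {b\<in>E. t b = s a \<and> (a, b) \<in> I}" using g unfolding gentle_def by simp
  show "card {b\<in>E. t b = s a \<and> (a, b) \<in> I} \<le> 1"
    using g gentle_relD[OF g assms(2)] unfolding gentle_def by blast
qed (use gentle_relD[OF g assms(2)] gentle_relD[OF g assms(3)] assms(2,3) in auto)

lemma gentle_rel_succ_unique:
  assumes g: "gentle V E s t I" and "(c, a) \<in> I" "(c', a) \<in> I"
  shows "c = c'"
proof (rule card_le_1_eqI)
  show "finite {c\<in>E. s c = t a \<and> (c, a) \<in> I}" using g unfolding gentle_def by simp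
  show "card {c\<in>E. s c = t a \<and> (c, a) \<in> I} \<le> 1"
    using g gentle_relD[OF g assms(2)] unfolding gentle_def by blast
qed (use gentle_relD[OF g assms(2)] gentle_relD[OF g assms(3)] assms(2,3) in auto)

lemma cyc_arrow_cycle:
  assumes "a \<in> cyc_arrows E s t I"
  obtains xs i where "xs \<noteq> []" "\<forall>x\<in>set xs. x \<in> cyc_arrows E s t I" "i < length xs" "xs ! i = a"
    "\<forall>i<length xs. (xs ! (Suc i mod length xs), xs ! i) \<in> I"
proof -
  obtain xs where xs: "xs \<noteq> []" "distinct xs" "set xs \<subseteq> E" "a \<in> set xs"
    and cyc: "\<forall>i<length xs. t (xs ! i) = s (xs ! (Suc i mod length xs)) \<and>
                    (xs ! (Suc i mod length xs), xs ! i) \<in> I"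
    using assms unfolding cyc_arrows_def cyc_arrow_def by blast
  have "\<forall>x\<in>set xs. x \<in> cyc_arrows E s t I"
    using xs cyc unfolding cyc_arrows_def cyc_arrow_def by blast
  moreover obtain i where "i < length xs" "xs ! i = a" using xs(4) by (metis in_set_conv_nth)
  ultimately show thesis using that xs(1) cyc by blast
qed

lemma cyc_arrow_rel_succ:
  assumes "a \<in> cyc_arrows E s t I"
  obtains c where "c \<in> cyc_arrows E s t I" "(c, a) \<in> I"
proof -
  obtain xs i where xs: "xs \<noteq> []" "\<forall>x\<in>set xs. x \<in> cyc_arrows E s t I" "i < length xs" "xs ! i = a"
    and rel: "\<forall>i<length xs. (xs ! (Suc i mod length xs), xs ! i) \<in> I"
    using cyc_arrow_cycle[OF assms] .
  have "Suc i mod length xs < length xs" using xs(1) by simp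
  hence "xs ! (Suc i mod length xs) \<in> cyc_arrows E s t I" using xs(2) nth_mem by blast
  moreover have "(xs ! (Suc i mod length xs), a) \<in> I" using rel xs(3,4) by blast
  ultimately show thesis by (rule that)
qed

lemma cyc_arrow_rel_pred:
  assumes "a \<in> cyc_arrows E s t I"
  obtains c where "c \<in> cyc_arrows E s t I" "(a, c) \<in> I"
proof -
  obtain xs i where xs: "xs \<noteq> []" "\<forall>x\<in>set xs. x \<in> cyc_arrows E s t I" "i < length xs" "xs ! i = a"
    and rel: "\<forall>i<length xs. (xs ! (Suc i mod length xs), xs ! i) \<in> I"
    using cyc_arrow_cycle[OF assms] .
  define n where "n = length xs"
  define j where "j = (i + n - 1) mod n"
  have "n > 0" "i < n" using xs(1,3) by (simp_all add: n_def)
  hence "j < n" "Suc j mod n = i" by (simp_all add: j_def mod_Suc_eq)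
  thus thesis using that[of "xs ! j"] xs rel unfolding n_def by auto
qed

lemma cyc_arrows_rel_iff:
  assumes g: "gentle V E s t I" and r: "(b, a) \<in> I"
  shows "a \<in> cyc_arrows E s t I \<longleftrightarrow> b \<in> cyc_arrows E s t I"
proof
  assume "a \<in> cyc_arrows E s t I"
  then obtain c where "c \<in> cyc_arrows E s t I" "(c, a) \<in> I" by (rule cyc_arrow_rel_succ)
  thus "b \<in> cyc_arrows E s t I" using gentle_rel_succ_unique[OF g r] by blast
next
  assume "b \<in> cyc_arrows E s t I"
  then obtain c where "c \<in> cyc_arrows E s t I" "(b, c) \<in> I" by (rule cyc_arrow_rel_pred)
  thus "a \<in> cyc_arrows E s t I" using gentle_rel_pred_unique[OF g r] by blast
qed

lemma nonzero_path_iff_successively: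
  "nonzero_path E s t I p \<longleftrightarrow> set p \<subseteq> E \<and> successively (\<lambda>f e. t f = s e \<and> (e, f) \<notin> I) p"
proof (induction p rule: induct_list012)
  case (3 x y zs)
  have "(\<forall>i. Suc i < length (x # y # zs) \<longrightarrow> Q i) \<longleftrightarrow>
      Q 0 \<and> (\<forall>i. Suc i < length (y # zs) \<longrightarrow> Q (Suc i))" for Q
    by (metis Suc_less_eq length_Cons not0_implies_Suc zero_less_Suc)
  then show ?case using 3 by (simp add: nonzero_path_def) blast
qed (auto simp: nonzero_path_def)

lemma finite_nonzero_paths:
  assumes "gentle V E s t I"
  shows "finite {p. nonzero_path E s t I p}"
proof -
  obtain N where N: "\<forall>p. nonzero_path E s t I p \<longrightarrow> length p \<le> N" and "finite E"
    using assms unfolding gentle_def by blast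
  hence "{p. nonzero_path E s t I p} \<subseteq> {p. set p \<subseteq> E \<and> length p \<le> N}"
    unfolding nonzero_path_def by blast
  thus ?thesis using finite_lists_length_le[OF \<open>finite E\<close>] by (rule finite_subset)
qed

lemma cyc_arrows_subset: "cyc_arrows E s t I \<subseteq> E"
  unfolding cyc_arrows_def by blast

lemma cyc_arrow_endpoints:
  assumes "gentle V E s t I" "\<alpha> \<in> cyc_arrows E s t I"
  shows "s \<alpha> \<in> V \<and> t \<alpha> \<in> V"
  using gentle_arrowD[OF assms(1)] assms(2) unfolding cyc_arrows_def by blast

section \<open>Representations\<close>

lemma is_rep_carrier: "is_rep V E s t I d m \<Longrightarrow> e \<in> E \<Longrightarrow> m e \<in> carrier_mat (d (t e)) (d (s e))"
  unfolding is_rep_def by blast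

lemma is_rep_rel: "is_rep V E s t I d m \<Longrightarrow> (b, a) \<in> I \<Longrightarrow> m b * m a = 0\<^sub>m (d (t b)) (d (s a))"
  unfolding is_rep_def by blast

lemma is_hom_carrier: "is_hom V E s t d m d' m' f \<Longrightarrow> i \<in> V \<Longrightarrow> f i \<in> carrier_mat (d' i) (d i)"
  unfolding is_hom_def by blast

lemma is_hom_commutes: "is_hom V E s t d m d' m' f \<Longrightarrow> e \<in> E \<Longrightarrow> f (t e) * m e = m' e * f (s e)"
  unfolding is_hom_def by blast

lemma is_hom_id: "is_rep V E s t I d m \<Longrightarrow> is_hom V E s t d m d m (\<lambda>i. 1\<^sub>m (d i))"
  unfolding is_hom_def by (auto dest: is_rep_carrier)

lemma is_hom_comp:
  assumes st: "\<And>e. e \<in> E \<Longrightarrow> s e \<in> V \<and> t e \<in> V"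
    and r1: "is_rep V E s t I d1 m1" and r2: "is_rep V E s t I d2 m2" and r3: "is_rep V E s t I d3 m3"
    and f: "is_hom V E s t d1 m1 d2 m2 f" and g: "is_hom V E s t d2 m2 d3 m3 g"
  shows "is_hom V E s t d1 m1 d3 m3 (\<lambda>i. g i * f i)"
  unfolding is_hom_def
proof (intro conjI ballI)
  fix e assume e: "e \<in> E"
  have st_e: "s e \<in> V" "t e \<in> V" using st[OF e] by auto
  note m = is_rep_carrier[OF r1 e] is_rep_carrier[OF r2 e] is_rep_carrier[OF r3 e]
  note fs = is_hom_carrier[OF f st_e(1)] and ft = is_hom_carrier[OF f st_e(2)]
    and gs = is_hom_carrier[OF g st_e(1)] and gt = is_hom_carrier[OF g st_e(2)]
  have "g (t e) * f (t e) * m1 e = g (t e) * (f (t e) * m1 e)" by (rule assoc_mult_mat[OF gt ft m(1)])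
  also have "\<dots> = (g (t e) * m2 e) * f (s e)"
    using is_hom_commutes[OF f e] assoc_mult_mat[OF gt m(2) fs] by simp
  also have "\<dots> = m3 e * (g (s e) * f (s e))"
    using is_hom_commutes[OF g e] assoc_mult_mat[OF m(3) gs fs] by simp
  finally show "g (t e) * f (t e) * m1 e = m3 e * (g (s e) * f (s e))" .
next
  fix i assume "i \<in> V"
  thus "g i * f i \<in> carrier_mat (d3 i) (d1 i)"
    using is_hom_carrier[OF f] is_hom_carrier[OF g] by (metis mult_carrier_mat)
qed

lemma is_hom_cong:
  assumes "is_hom V E s t d1 m1 d1' m1' f"
    "\<forall>i\<in>V. d1 i = d2 i" "\<forall>i\<in>V. d1' i = d2' i" "\<forall>e\<in>E. m1 e = m2 e" "\<forall>e\<in>E. m1' e = m2' e"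
  shows "is_hom V E s t d2 m2 d2' m2' f"
  using assms unfolding is_hom_def by auto

lemma projective_repD:
  assumes "projective_rep V E s t I d m" "is_rep V E s t I dM mM" "is_rep V E s t I dN mN"
    "is_hom V E s t dM mM dN mN g" "\<forall>i\<in>V. mat_surj (g i)" "is_hom V E s t d m dN mN h"
  shows "\<exists>k. is_hom V E s t d m dM mM k \<and> (\<forall>i\<in>V. g i * k i = h i)"
  using assms unfolding projective_rep_def by blast

lemma injective_repD:
  assumes "injective_rep V E s t I d m" "is_rep V E s t I dM mM" "is_rep V E s t I dN mN"
    "is_hom V E s t dM mM dN mN g" "\<forall>i\<in>V. mat_inj (g i)" "is_hom V E s t dM mM d m h"
  shows "\<exists>k. is_hom V E s t dN mN d m k \<and> (\<forall>i\<in>V. k i * g i = h i)"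
  using assms unfolding injective_rep_def by blast

definition exact_at_relations :: "('e \<times> 'e) set \<Rightarrow> ('e \<Rightarrow> 'a::field mat) \<Rightarrow> bool" where
  "exact_at_relations I m \<longleftrightarrow> (\<forall>(b, a)\<in>I. kernel_in_image (m b) (m a))"

lemma exact_at_relations_retract:
  assumes g: "gentle V E s t I" and r: "is_rep V E s t I d m" and R: "is_rep V E s t I n M"
    and k: "is_hom V E s t d m n M k" and h: "is_hom V E s t n M d m h"
    and retract: "\<forall>i\<in>V. h i * k i = 1\<^sub>m (d i)" and exact: "exact_at_relations I M"
  shows "exact_at_relations I m"
  unfolding exact_at_relations_def
proof (intro ballI, clarify)
  fix b a assume rel: "(b, a) \<in> I"
  have ab: "a \<in> E" "b \<in> E" and tab: "t a = s b" using gentle_relD[OF g rel] by auto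
  have V: "s a \<in> V" "s b \<in> V" "t b \<in> V" using gentle_arrowD[OF g] ab by auto
  show "kernel_in_image (m b) (m a)"
  proof (rule kernel_in_image_retract)
    show "m b \<in> carrier_mat (d (t b)) (d (s b))" "M b \<in> carrier_mat (n (t b)) (n (s b))"
      using is_rep_carrier[OF r ab(2)] is_rep_carrier[OF R ab(2)] .
    show "m a \<in> carrier_mat (d (s b)) (d (s a))" "M a \<in> carrier_mat (n (s b)) (n (s a))"
      using is_rep_carrier[OF r ab(1)] is_rep_carrier[OF R ab(1)] tab by simp_all
    show "k (s b) \<in> carrier_mat (n (s b)) (d (s b))" "k (t b) \<in> carrier_mat (n (t b)) (d (t b))"
      "h (s a) \<in> carrier_mat (d (s a)) (n (s a))" "h (s b) \<in> carrier_mat (d (s b)) (n (s b))"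
      using is_hom_carrier[OF k] is_hom_carrier[OF h] V by auto
    show "h (s b) * k (s b) = 1\<^sub>m (d (s b))" using retract V by blast
    show "k (t b) * m b = M b * k (s b)" by (rule is_hom_commutes[OF k ab(2)])
    show "h (s b) * M a = m a * h (s a)" using is_hom_commutes[OF h ab(1)] tab by simp
    show "kernel_in_image (M b) (M a)" using exact rel unfolding exact_at_relations_def by blast
  qed
qed

section \<open>The functor \<open>\<Phi>\<close>\<close>

abbreviation aus_rep :: "'v set \<Rightarrow> 'e set \<Rightarrow> ('e \<Rightarrow> 'v) \<Rightarrow> ('e \<Rightarrow> 'v) \<Rightarrow> ('e \<times> 'e) set
    \<Rightarrow> (('v, 'e) aus_vert \<Rightarrow> nat) \<Rightarrow> ('e aus_arr \<Rightarrow> 'a::field mat) \<Rightarrow> bool" where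
  "aus_rep V E s t I \<equiv> is_rep (aus_V V E s t I) (aus_E E s t I) (aus_s s) (aus_t t) (aus_I E s t I)"

abbreviation aus_hom :: "'v set \<Rightarrow> 'e set \<Rightarrow> ('e \<Rightarrow> 'v) \<Rightarrow> ('e \<Rightarrow> 'v) \<Rightarrow> ('e \<times> 'e) set
    \<Rightarrow> (('v, 'e) aus_vert \<Rightarrow> nat) \<Rightarrow> ('e aus_arr \<Rightarrow> 'a::field mat)
    \<Rightarrow> (('v, 'e) aus_vert \<Rightarrow> nat) \<Rightarrow> ('e aus_arr \<Rightarrow> 'a mat) \<Rightarrow> (('v, 'e) aus_vert \<Rightarrow> 'a mat) \<Rightarrow> bool" where
  "aus_hom V E s t I \<equiv> is_hom (aus_V V E s t I) (aus_E E s t I) (aus_s s) (aus_t t)"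

lemma aus_arrowD:
  assumes "gentle V E s t I" "x \<in> aus_E E s t I"
  shows "aus_s s x \<in> aus_V V E s t I \<and> aus_t t x \<in> aus_V V E s t I"
  using assms(2) gentle_arrowD[OF assms(1)] unfolding aus_E_def aus_V_def cyc_arrows_def by auto

lemma is_rep_ausD:
  assumes "aus_rep V E s t I dM mM"
  shows "\<alpha> \<in> cyc_arrows E s t I \<Longrightarrow> mM (PA \<alpha>) \<in> carrier_mat (dM (AV \<alpha>)) (dM (QV (s \<alpha>)))"
    and "\<alpha> \<in> cyc_arrows E s t I \<Longrightarrow> mM (MA \<alpha>) \<in> carrier_mat (dM (QV (t \<alpha>))) (dM (AV \<alpha>))"
    and "e \<in> E \<Longrightarrow> e \<notin> cyc_arrows E s t I \<Longrightarrow> mM (NA e) \<in> carrier_mat (dM (QV (t e))) (dM (QV (s e)))"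
  using assms unfolding is_rep_def aus_E_def by (auto simp: ball_Un)

lemma is_hom_ausD:
  assumes "aus_hom V E s t I dM mM dN mN f"
  shows "\<alpha> \<in> cyc_arrows E s t I \<Longrightarrow> f (AV \<alpha>) \<in> carrier_mat (dN (AV \<alpha>)) (dM (AV \<alpha>))"
    and "i \<in> V \<Longrightarrow> f (QV i) \<in> carrier_mat (dN (QV i)) (dM (QV i))"
    and "\<alpha> \<in> cyc_arrows E s t I \<Longrightarrow> f (AV \<alpha>) * mM (PA \<alpha>) = mN (PA \<alpha>) * f (QV (s \<alpha>))"
    and "\<alpha> \<in> cyc_arrows E s t I \<Longrightarrow> f (QV (t \<alpha>)) * mM (MA \<alpha>) = mN (MA \<alpha>) * f (AV \<alpha>)"
    and "e \<in> E \<Longrightarrow> e \<notin> cyc_arrows E s t I \<Longrightarrow> f (QV (t e)) * mM (NA e) = mN (NA e) * f (QV (s e))"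
  using assms unfolding is_hom_def aus_V_def aus_E_def by (auto simp: ball_Un)

lemma is_Phi_imageD:
  assumes "is_Phi_image V E s t I d m d' m'"
  shows "i \<in> V \<Longrightarrow> d' (QV i) = d i"
    and "e \<in> E \<Longrightarrow> e \<notin> cyc_arrows E s t I \<Longrightarrow> m' (NA e) = m e"
    and "\<alpha> \<in> cyc_arrows E s t I \<Longrightarrow> m' (PA \<alpha>) \<in> carrier_mat (d' (AV \<alpha>)) (d (s \<alpha>))"
    and "\<alpha> \<in> cyc_arrows E s t I \<Longrightarrow> m' (MA \<alpha>) \<in> carrier_mat (d (t \<alpha>)) (d' (AV \<alpha>))"
    and "\<alpha> \<in> cyc_arrows E s t I \<Longrightarrow> mat_surj (m' (PA \<alpha>))"
    and "\<alpha> \<in> cyc_arrows E s t I \<Longrightarrow> mat_inj (m' (MA \<alpha>))"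
    and "\<alpha> \<in> cyc_arrows E s t I \<Longrightarrow> m' (MA \<alpha>) * m' (PA \<alpha>) = m \<alpha>"
  using assms unfolding is_Phi_image_def by auto

text \<open>Restriction of scalars along the embedding of \<open>\<Lambda>\<close> into \<open>\<Gamma>\<close>, which sends a cyclic
  arrow \<open>\<alpha>\<close> to \<open>\<alpha>\<^sup>-\<alpha>\<^sup>+\<close>.\<close>

definition aus_restr_mat :: "'e set \<Rightarrow> ('e \<Rightarrow> 'v) \<Rightarrow> ('e \<Rightarrow> 'v) \<Rightarrow> ('e \<times> 'e) set
    \<Rightarrow> ('e aus_arr \<Rightarrow> 'a::field mat) \<Rightarrow> 'e \<Rightarrow> 'a mat" where
  "aus_restr_mat E s t I mM e = (if e \<in> cyc_arrows E s t I then mM (MA e) * mM (PA e) else mM (NA e))"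

lemma is_rep_aus_restr:
  assumes g: "gentle V E s t I"
    and r: "aus_rep V E s t I dM mM"
  shows "is_rep V E s t I (dM \<circ> QV) (aus_restr_mat E s t I mM)"
  unfolding is_rep_def
proof (intro conjI ballI)
  fix e assume "e \<in> E"
  thus "aus_restr_mat E s t I mM e \<in> carrier_mat ((dM \<circ> QV) (t e)) ((dM \<circ> QV) (s e))"
    using is_rep_ausD[OF r] by (auto simp: aus_restr_mat_def intro: mult_carrier_mat)
next
  fix x assume "x \<in> I"
  then obtain b a where x: "x = (b, a)" and rel: "(b, a) \<in> I" by (cases x) auto
  have ab: "a \<in> E" "b \<in> E" "t a = s b" using gentle_relD[OF g rel] by auto
  have "aus_restr_mat E s t I mM b * aus_restr_mat E s t I mM a = 0\<^sub>m (dM (QV (t b))) (dM (QV (s a)))"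
  proof (cases "a \<in> cyc_arrows E s t I")
    case True
    hence b: "b \<in> cyc_arrows E s t I" using cyc_arrows_rel_iff[OF g rel] by simp
    have "(PA b, MA a) \<in> aus_I E s t I" using rel True b unfolding aus_I_def by blast
    hence "mM (PA b) * mM (MA a) = 0\<^sub>m (dM (AV b)) (dM (AV a))" using is_rep_rel[OF r] by fastforce
    hence "mM (MA b) * mM (PA b) * (mM (MA a) * mM (PA a)) = 0\<^sub>m (dM (QV (t b))) (dM (QV (s a)))"
      using ab is_rep_ausD(1,2)[OF r True] is_rep_ausD(1,2)[OF r b]
      by (intro mult_mat_zero_middle[of _ _ "dM (AV b)" _ "dM (QV (s b))" _ "dM (AV a)"]) auto
    thus ?thesis using True b by (simp add: aus_restr_mat_def)
  next
    case False
    hence b: "b \<notin> cyc_arrows E s t I" using cyc_arrows_rel_iff[OF g rel] by simp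
    have "(NA b, NA a) \<in> aus_I E s t I" using rel False b ab unfolding aus_I_def by blast
    thus ?thesis using False b is_rep_rel[OF r] unfolding aus_restr_mat_def by fastforce
  qed
  thus "case x of (b, a) \<Rightarrow> aus_restr_mat E s t I mM b * aus_restr_mat E s t I mM a =
      0\<^sub>m ((dM \<circ> QV) (t b)) ((dM \<circ> QV) (s a))" using x by simp
qed

lemma is_hom_aus_restr:
  assumes g: "gentle V E s t I"
    and rM: "aus_rep V E s t I dM mM"
    and rN: "aus_rep V E s t I dN mN"
    and f: "aus_hom V E s t I dM mM dN mN f"
  shows "is_hom V E s t (dM \<circ> QV) (aus_restr_mat E s t I mM) (dN \<circ> QV) (aus_restr_mat E s t I mN) (f \<circ> QV)"
  unfolding is_hom_def
proof (intro conjI ballI)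
  fix e assume e: "e \<in> E"
  have st: "s e \<in> V" "t e \<in> V" using gentle_arrowD[OF g e] by auto
  show "(f \<circ> QV) (t e) * aus_restr_mat E s t I mM e = aus_restr_mat E s t I mN e * (f \<circ> QV) (s e)"
  proof (cases "e \<in> cyc_arrows E s t I")
    case True
    note c = is_rep_ausD(1,2)[OF rM True] is_rep_ausD(1,2)[OF rN True]
      is_hom_ausD(1)[OF f True] is_hom_ausD(2)[OF f st(1)] is_hom_ausD(2)[OF f st(2)]
    have "f (QV (t e)) * (mM (MA e) * mM (PA e)) = mN (MA e) * f (AV e) * mM (PA e)"
      using c is_hom_ausD(4)[OF f True] by (simp flip: assoc_mult_mat[of _ "dN (QV (t e))" "dM (QV (t e))"])
    also have "\<dots> = mN (MA e) * (mN (PA e) * f (QV (s e)))"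
      using c is_hom_ausD(3)[OF f True] by (simp add: assoc_mult_mat[of _ "dN (QV (t e))" "dN (AV e)"])
    also have "\<dots> = mN (MA e) * mN (PA e) * f (QV (s e))"
      using c by (simp add: assoc_mult_mat[of _ "dN (QV (t e))" "dN (AV e)"])
    finally show ?thesis using True by (simp add: aus_restr_mat_def)
  next
    case False
    thus ?thesis using is_hom_ausD(5)[OF f e] by (simp add: aus_restr_mat_def)
  qed
qed (use is_hom_ausD(2)[OF f] in simp)

lemma Phi_image_PA_MA_eq_0:
  assumes g: "gentle V E s t I" and r: "is_rep V E s t I d m" and P: "is_Phi_image V E s t I d m d' m'"
    and rel: "(b, a) \<in> I" and a: "a \<in> cyc_arrows E s t I" and b: "b \<in> cyc_arrows E s t I"
  shows "m' (PA b) * m' (MA a) = 0\<^sub>m (d' (AV b)) (d' (AV a))"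
proof -
  have ab: "t a = s b" using gentle_relD[OF g rel] by simp
  note Pa = is_Phi_imageD(3)[OF P a] and Mb = is_Phi_imageD(4)[OF P b] and Pb = is_Phi_imageD(3)[OF P b]
  have Ma: "m' (MA a) \<in> carrier_mat (d (s b)) (d' (AV a))" using is_Phi_imageD(4)[OF P a] ab by simp
  have PM: "m' (PA b) * m' (MA a) \<in> carrier_mat (d' (AV b)) (d' (AV a))" using Pb Ma by simp
  \<comment> \<open>\<open>m'(MA b) (m'(PA b) m'(MA a)) m'(PA a) = m b m a = 0\<close>; cancel the outer factors\<close>
  have "m' (MA b) * ((m' (PA b) * m' (MA a)) * m' (PA a)) = m' (MA b) * m' (PA b) * (m' (MA a) * m' (PA a))"
    using assoc_mult_mat[OF Pb Ma Pa] assoc_mult_mat[OF Mb Pb mult_carrier_mat[OF Ma Pa]] by simp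
  also have "\<dots> = m' (MA b) * 0\<^sub>m (d' (AV b)) (d (s a))"
    using is_rep_rel[OF r rel] is_Phi_imageD(7)[OF P] a b Mb by simp
  finally have "(m' (PA b) * m' (MA a)) * m' (PA a) = 0\<^sub>m (d' (AV b)) (d (s a))"
    using mat_inj_cancel_left[OF Mb is_Phi_imageD(6)[OF P b]] PM Pa by (meson mult_carrier_mat zero_carrier_mat)
  hence "(m' (PA b) * m' (MA a)) * m' (PA a) = 0\<^sub>m (d' (AV b)) (d' (AV a)) * m' (PA a)"
    using Pa by simp
  thus ?thesis using mat_surj_cancel_right[OF Pa is_Phi_imageD(5)[OF P a] PM zero_carrier_mat] by blast
qed

lemma is_rep_Phi_image:
  assumes g: "gentle V E s t I" and r: "is_rep V E s t I d m"
    and P: "is_Phi_image V E s t I d m d' m'"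
  shows "aus_rep V E s t I d' m'"
  unfolding is_rep_def
proof (intro conjI ballI)
  fix x assume "x \<in> aus_E E s t I"
  then consider (ncyc) e where "x = NA e" "e \<in> E" "e \<notin> cyc_arrows E s t I"
    | (cyc) \<alpha> where "x = PA \<alpha> \<or> x = MA \<alpha>" "\<alpha> \<in> cyc_arrows E s t I"
    unfolding aus_E_def by blast
  thus "m' x \<in> carrier_mat (d' (aus_t t x)) (d' (aus_s s x))"
  proof cases
    case (ncyc e)
    thus ?thesis using is_Phi_imageD(1,2)[OF P] is_rep_carrier[OF r] gentle_arrowD[OF g] by auto
  next
    case (cyc \<alpha>)
    have "\<alpha> \<in> E" using cyc(2) unfolding cyc_arrows_def by blast
    thus ?thesis using cyc is_Phi_imageD(1,3,4)[OF P] gentle_arrowD[OF g] by auto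
  qed
next
  fix x assume "x \<in> aus_I E s t I"
  then consider (cyc) a b where "x = (PA b, MA a)" "(b, a) \<in> I" "a \<in> cyc_arrows E s t I" "b \<in> cyc_arrows E s t I"
    | (ncyc) a b where "x = (NA b, NA a)" "(b, a) \<in> I" "a \<in> E - cyc_arrows E s t I" "b \<in> E - cyc_arrows E s t I"
    unfolding aus_I_def by blast
  thus "case x of (y, z) \<Rightarrow> m' y * m' z = 0\<^sub>m (d' (aus_t t y)) (d' (aus_s s z))"
  proof cases
    case (cyc a b)
    have "m' (PA b) * m' (MA a) = 0\<^sub>m (d' (AV b)) (d' (AV a))"
      by (rule Phi_image_PA_MA_eq_0[OF g r P cyc(2-4)])
    thus ?thesis using cyc(1) by simp
  next
    case (ncyc a b)
    thus ?thesis using is_rep_rel[OF r ncyc(2)] gentle_relD[OF g ncyc(2)] gentle_arrowD[OF g]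
      is_Phi_imageD(1,2)[OF P] by auto
  qed
qed

lemma Phi_image_restr:
  assumes "is_Phi_image V E s t I d m d' m'"
  shows "\<forall>i\<in>V. (d' \<circ> QV) i = d i" "\<forall>e\<in>E. aus_restr_mat E s t I m' e = m e"
  using is_Phi_imageD[OF assms] unfolding aus_restr_mat_def by auto

lemma Phi_image_homs_eq_from:
  assumes g: "gentle V E s t I" and P: "is_Phi_image V E s t I d m d' m'"
    and f1: "aus_hom V E s t I d' m' dN mN f1"
    and f2: "aus_hom V E s t I d' m' dN mN f2"
    and QV: "\<And>i. i \<in> V \<Longrightarrow> f1 (QV i) = f2 (QV i)"
    and v: "v \<in> aus_V V E s t I"
  shows "f1 v = f2 v"
proof -
  consider (QV) i where "v = QV i" "i \<in> V" | (AV) \<alpha> where "v = AV \<alpha>" "\<alpha> \<in> cyc_arrows E s t I"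
    using v unfolding aus_V_def by blast
  thus ?thesis
  proof cases
    case (AV \<alpha>)
    have "f1 (AV \<alpha>) * m' (PA \<alpha>) = f2 (AV \<alpha>) * m' (PA \<alpha>)"
      using is_hom_ausD(3)[OF f1 AV(2)] is_hom_ausD(3)[OF f2 AV(2)] QV cyc_arrow_endpoints[OF g AV(2)]
      by simp
    from mat_surj_cancel_right[OF is_Phi_imageD(3,5)[OF P AV(2)]
        is_hom_ausD(1)[OF f1 AV(2)] is_hom_ausD(1)[OF f2 AV(2)] this]
    show ?thesis using AV(1) by simp
  qed (use QV in simp)
qed

lemma Phi_image_homs_eq_to:
  assumes g: "gentle V E s t I" and P: "is_Phi_image V E s t I d m d' m'"
    and f1: "aus_hom V E s t I dM mM d' m' f1"
    and f2: "aus_hom V E s t I dM mM d' m' f2"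
    and QV: "\<And>i. i \<in> V \<Longrightarrow> f1 (QV i) = f2 (QV i)"
    and v: "v \<in> aus_V V E s t I"
  shows "f1 v = f2 v"
proof -
  consider (QV) i where "v = QV i" "i \<in> V" | (AV) \<alpha> where "v = AV \<alpha>" "\<alpha> \<in> cyc_arrows E s t I"
    using v unfolding aus_V_def by blast
  thus ?thesis
  proof cases
    case (AV \<alpha>)
    have "m' (MA \<alpha>) * f1 (AV \<alpha>) = m' (MA \<alpha>) * f2 (AV \<alpha>)"
      using is_hom_ausD(4)[OF f1 AV(2)] is_hom_ausD(4)[OF f2 AV(2)] QV cyc_arrow_endpoints[OF g AV(2)]
      by metis
    from mat_inj_cancel_left[OF is_Phi_imageD(4,6)[OF P AV(2)]
        is_hom_ausD(1)[OF f1 AV(2)] is_hom_ausD(1)[OF f2 AV(2)] this]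
    show ?thesis using AV(1) by simp
  qed (use QV in simp)
qed

lemma Phi_image_lift_commutes_MA:
  assumes g: "gentle V E s t I" and P: "is_Phi_image V E s t I d m d' m'"
    and rM: "aus_rep V E s t I dM mM"
    and k: "is_hom V E s t d m (dM \<circ> QV) (aus_restr_mat E s t I mM) k"
    and \<alpha>: "\<alpha> \<in> cyc_arrows E s t I" and C: "C \<in> carrier_mat (dM (AV \<alpha>)) (d' (AV \<alpha>))"
    and CP: "C * m' (PA \<alpha>) = mM (PA \<alpha>) * k (s \<alpha>)"
  shows "k (t \<alpha>) * m' (MA \<alpha>) = mM (MA \<alpha>) * C"
proof -
  have \<alpha>E: "\<alpha> \<in> E" and st: "s \<alpha> \<in> V" "t \<alpha> \<in> V"
    using cyc_arrows_subset[THEN subsetD, OF \<alpha>] cyc_arrow_endpoints[OF g \<alpha>] by auto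
  note Pp = is_Phi_imageD(3)[OF P \<alpha>] and Pm = is_Phi_imageD(4)[OF P \<alpha>]
    and Mp = is_rep_ausD(1)[OF rM \<alpha>] and Mm = is_rep_ausD(2)[OF rM \<alpha>]
    and ks = is_hom_carrier[OF k st(1), simplified] and kt = is_hom_carrier[OF k st(2), simplified]
  have "(k (t \<alpha>) * m' (MA \<alpha>)) * m' (PA \<alpha>) = k (t \<alpha>) * m \<alpha>"
    using assoc_mult_mat[OF kt Pm Pp] is_Phi_imageD(7)[OF P \<alpha>] by simp
  also have "\<dots> = mM (MA \<alpha>) * mM (PA \<alpha>) * k (s \<alpha>)"
    using is_hom_commutes[OF k \<alpha>E] \<alpha> by (simp add: aus_restr_mat_def)
  also have "\<dots> = (mM (MA \<alpha>) * C) * m' (PA \<alpha>)"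
    using assoc_mult_mat[OF Mm Mp ks] assoc_mult_mat[OF Mm C Pp] CP by simp
  finally have eq: "(k (t \<alpha>) * m' (MA \<alpha>)) * m' (PA \<alpha>) = (mM (MA \<alpha>) * C) * m' (PA \<alpha>)" .
  have "k (t \<alpha>) * m' (MA \<alpha>) \<in> carrier_mat (dM (QV (t \<alpha>))) (d' (AV \<alpha>))"
    and "mM (MA \<alpha>) * C \<in> carrier_mat (dM (QV (t \<alpha>))) (d' (AV \<alpha>))"
    using kt Pm Mm C by auto
  from mat_surj_cancel_right[OF Pp is_Phi_imageD(5)[OF P \<alpha>] this eq] show ?thesis .
qed

lemma is_hom_from_Phi_image:
  assumes g: "gentle V E s t I" and P: "is_Phi_image V E s t I d m d' m'"
    and rM: "aus_rep V E s t I dM mM"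
    and k: "is_hom V E s t d m (dM \<circ> QV) (aus_restr_mat E s t I mM) k"
    and C: "\<And>\<alpha>. \<alpha> \<in> cyc_arrows E s t I \<Longrightarrow> C \<alpha> \<in> carrier_mat (dM (AV \<alpha>)) (d' (AV \<alpha>))"
    and CP: "\<And>\<alpha>. \<alpha> \<in> cyc_arrows E s t I \<Longrightarrow> C \<alpha> * m' (PA \<alpha>) = mM (PA \<alpha>) * k (s \<alpha>)"
  shows "aus_hom V E s t I d' m' dM mM (case_aus_vert k C)"
  unfolding is_hom_def
proof (intro conjI ballI)
  fix v assume "v \<in> aus_V V E s t I"
  thus "case_aus_vert k C v \<in> carrier_mat (dM v) (d' v)"
    using is_hom_carrier[OF k] is_Phi_imageD(1)[OF P] C unfolding aus_V_def by auto
next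
  fix x assume "x \<in> aus_E E s t I"
  then consider (NA) e where "x = NA e" "e \<in> E" "e \<notin> cyc_arrows E s t I"
    | (PA) \<alpha> where "x = PA \<alpha>" "\<alpha> \<in> cyc_arrows E s t I" | (MA) \<alpha> where "x = MA \<alpha>" "\<alpha> \<in> cyc_arrows E s t I"
    unfolding aus_E_def by blast
  thus "case_aus_vert k C (aus_t t x) * m' x = mM x * case_aus_vert k C (aus_s s x)"
  proof cases
    case (NA e)
    thus ?thesis using is_hom_commutes[OF k NA(2)] is_Phi_imageD(2)[OF P]
      by (simp add: aus_restr_mat_def)
  next
    case (PA \<alpha>)
    thus ?thesis using CP by simp
  next
    case (MA \<alpha>)
    thus ?thesis using Phi_image_lift_commutes_MA[OF g P rM k MA(2) C CP] by simp
  qed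
qed

lemma Phi_image_extend_commutes_PA:
  assumes g: "gentle V E s t I" and P: "is_Phi_image V E s t I d m d' m'"
    and rN: "aus_rep V E s t I dN mN"
    and k: "is_hom V E s t (dN \<circ> QV) (aus_restr_mat E s t I mN) d m k"
    and \<alpha>: "\<alpha> \<in> cyc_arrows E s t I" and C: "C \<in> carrier_mat (d' (AV \<alpha>)) (dN (AV \<alpha>))"
    and MC: "m' (MA \<alpha>) * C = k (t \<alpha>) * mN (MA \<alpha>)"
  shows "C * mN (PA \<alpha>) = m' (PA \<alpha>) * k (s \<alpha>)"
proof -
  have \<alpha>E: "\<alpha> \<in> E" and st: "s \<alpha> \<in> V" "t \<alpha> \<in> V"
    using cyc_arrows_subset[THEN subsetD, OF \<alpha>] cyc_arrow_endpoints[OF g \<alpha>] by auto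
  note Pp = is_Phi_imageD(3)[OF P \<alpha>] and Pm = is_Phi_imageD(4)[OF P \<alpha>]
    and Np = is_rep_ausD(1)[OF rN \<alpha>] and Nm = is_rep_ausD(2)[OF rN \<alpha>]
    and ks = is_hom_carrier[OF k st(1), simplified] and kt = is_hom_carrier[OF k st(2), simplified]
  have "m' (MA \<alpha>) * (C * mN (PA \<alpha>)) = k (t \<alpha>) * mN (MA \<alpha>) * mN (PA \<alpha>)"
    using assoc_mult_mat[OF Pm C Np] MC by simp
  also have "\<dots> = m \<alpha> * k (s \<alpha>)"
    using assoc_mult_mat[OF kt Nm Np] is_hom_commutes[OF k \<alpha>E] \<alpha> by (simp add: aus_restr_mat_def)
  also have "\<dots> = m' (MA \<alpha>) * (m' (PA \<alpha>) * k (s \<alpha>))"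
    using assoc_mult_mat[OF Pm Pp ks] is_Phi_imageD(7)[OF P \<alpha>] by simp
  finally have eq: "m' (MA \<alpha>) * (C * mN (PA \<alpha>)) = m' (MA \<alpha>) * (m' (PA \<alpha>) * k (s \<alpha>))" .
  have "C * mN (PA \<alpha>) \<in> carrier_mat (d' (AV \<alpha>)) (dN (QV (s \<alpha>)))"
    and "m' (PA \<alpha>) * k (s \<alpha>) \<in> carrier_mat (d' (AV \<alpha>)) (dN (QV (s \<alpha>)))"
    using C Np Pp ks by auto
  from mat_inj_cancel_left[OF Pm is_Phi_imageD(6)[OF P \<alpha>] this eq] show ?thesis .
qed

lemma is_hom_to_Phi_image:
  assumes g: "gentle V E s t I" and P: "is_Phi_image V E s t I d m d' m'"
    and rN: "aus_rep V E s t I dN mN"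
    and k: "is_hom V E s t (dN \<circ> QV) (aus_restr_mat E s t I mN) d m k"
    and C: "\<And>\<alpha>. \<alpha> \<in> cyc_arrows E s t I \<Longrightarrow> C \<alpha> \<in> carrier_mat (d' (AV \<alpha>)) (dN (AV \<alpha>))"
    and MC: "\<And>\<alpha>. \<alpha> \<in> cyc_arrows E s t I \<Longrightarrow> m' (MA \<alpha>) * C \<alpha> = k (t \<alpha>) * mN (MA \<alpha>)"
  shows "aus_hom V E s t I dN mN d' m' (case_aus_vert k C)"
  unfolding is_hom_def
proof (intro conjI ballI)
  fix v assume "v \<in> aus_V V E s t I"
  thus "case_aus_vert k C v \<in> carrier_mat (d' v) (dN v)"
    using is_hom_carrier[OF k] is_Phi_imageD(1)[OF P] C unfolding aus_V_def by auto
next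
  fix x assume "x \<in> aus_E E s t I"
  then consider (NA) e where "x = NA e" "e \<in> E" "e \<notin> cyc_arrows E s t I"
    | (PA) \<alpha> where "x = PA \<alpha>" "\<alpha> \<in> cyc_arrows E s t I" | (MA) \<alpha> where "x = MA \<alpha>" "\<alpha> \<in> cyc_arrows E s t I"
    unfolding aus_E_def by blast
  thus "case_aus_vert k C (aus_t t x) * mN x = m' x * case_aus_vert k C (aus_s s x)"
  proof cases
    case (NA e)
    thus ?thesis using is_hom_commutes[OF k NA(2)] is_Phi_imageD(2)[OF P]
      by (simp add: aus_restr_mat_def)
  next
    case (MA \<alpha>)
    thus ?thesis using MC by simp
  next
    case (PA \<alpha>)
    thus ?thesis using Phi_image_extend_commutes_PA[OF g P rN k PA(2) C MC] by simp
  qed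
qed

lemma aus_restr_hom_PA_rel_eq_0:
  assumes g: "gentle V E s t I" and r: "is_rep V E s t I d m"
    and rM: "aus_rep V E s t I dM mM"
    and k: "is_hom V E s t d m (dM \<circ> QV) (aus_restr_mat E s t I mM) k"
    and rel: "(\<alpha>, \<gamma>) \<in> I" and \<alpha>: "\<alpha> \<in> cyc_arrows E s t I"
  shows "mM (PA \<alpha>) * k (s \<alpha>) * m \<gamma> = 0\<^sub>m (dM (AV \<alpha>)) (d (s \<gamma>))"
proof -
  have \<gamma>: "\<gamma> \<in> cyc_arrows E s t I" using cyc_arrows_rel_iff[OF g rel] \<alpha> by simp
  have \<gamma>E: "\<gamma> \<in> E" and t\<gamma>: "t \<gamma> = s \<alpha>" using gentle_relD[OF g rel] by auto
  have st: "s \<alpha> \<in> V" "s \<gamma> \<in> V" using cyc_arrow_endpoints[OF g] \<alpha> \<gamma> by auto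
  note Mp\<alpha> = is_rep_ausD(1)[OF rM \<alpha>] and Mp\<gamma> = is_rep_ausD(1)[OF rM \<gamma>]
    and k\<alpha> = is_hom_carrier[OF k st(1), simplified] and k\<gamma> = is_hom_carrier[OF k st(2), simplified]
  have Mm\<gamma>: "mM (MA \<gamma>) \<in> carrier_mat (dM (QV (s \<alpha>))) (dM (AV \<gamma>))" using is_rep_ausD(2)[OF rM \<gamma>] t\<gamma> by simp
  have m\<gamma>: "m \<gamma> \<in> carrier_mat (d (s \<alpha>)) (d (s \<gamma>))" using is_rep_carrier[OF r \<gamma>E] t\<gamma> by simp
  have "(PA \<alpha>, MA \<gamma>) \<in> aus_I E s t I" using rel \<alpha> \<gamma> unfolding aus_I_def by blast
  hence zero: "mM (PA \<alpha>) * mM (MA \<gamma>) = 0\<^sub>m (dM (AV \<alpha>)) (dM (AV \<gamma>))"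
    using is_rep_rel[OF rM] by fastforce
  have "mM (PA \<alpha>) * k (s \<alpha>) * m \<gamma> = mM (PA \<alpha>) * (k (t \<gamma>) * m \<gamma>)"
    using assoc_mult_mat[OF Mp\<alpha> k\<alpha> m\<gamma>] t\<gamma> by simp
  also have "\<dots> = mM (PA \<alpha>) * (mM (MA \<gamma>) * (mM (PA \<gamma>) * k (s \<gamma>)))"
    using is_hom_commutes[OF k \<gamma>E] \<gamma> assoc_mult_mat[OF Mm\<gamma> Mp\<gamma> k\<gamma>] t\<gamma> by (simp add: aus_restr_mat_def)
  also have "\<dots> = (mM (PA \<alpha>) * mM (MA \<gamma>)) * (mM (PA \<gamma>) * k (s \<gamma>))"
    using assoc_mult_mat[OF Mp\<alpha> Mm\<gamma> mult_carrier_mat[OF Mp\<gamma> k\<gamma>]] by simp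
  finally show ?thesis using zero Mp\<gamma> k\<gamma> by simp
qed

lemma aus_restr_hom_rel_MA_eq_0:
  assumes g: "gentle V E s t I" and r: "is_rep V E s t I d m"
    and rN: "aus_rep V E s t I dN mN"
    and k: "is_hom V E s t (dN \<circ> QV) (aus_restr_mat E s t I mN) d m k"
    and rel: "(\<beta>, \<alpha>) \<in> I" and \<alpha>: "\<alpha> \<in> cyc_arrows E s t I"
  shows "m \<beta> * (k (t \<alpha>) * mN (MA \<alpha>)) = 0\<^sub>m (d (t \<beta>)) (dN (AV \<alpha>))"
proof -
  have \<beta>: "\<beta> \<in> cyc_arrows E s t I" using cyc_arrows_rel_iff[OF g rel] \<alpha> by simp
  have \<beta>E: "\<beta> \<in> E" and s\<beta>: "s \<beta> = t \<alpha>" using gentle_relD[OF g rel] by auto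
  have st: "t \<alpha> \<in> V" "t \<beta> \<in> V" using cyc_arrow_endpoints[OF g] \<alpha> \<beta> by auto
  note Nm\<alpha> = is_rep_ausD(2)[OF rN \<alpha>] and Nm\<beta> = is_rep_ausD(2)[OF rN \<beta>]
    and k\<alpha> = is_hom_carrier[OF k st(1), simplified] and k\<beta> = is_hom_carrier[OF k st(2), simplified]
  have m\<beta>: "m \<beta> \<in> carrier_mat (d (t \<beta>)) (d (t \<alpha>))" using is_rep_carrier[OF r \<beta>E] s\<beta> by simp
  have Np\<beta>: "mN (PA \<beta>) \<in> carrier_mat (dN (AV \<beta>)) (dN (QV (t \<alpha>)))" using is_rep_ausD(1)[OF rN \<beta>] s\<beta> by simp
  have "(PA \<beta>, MA \<alpha>) \<in> aus_I E s t I" using rel \<alpha> \<beta> unfolding aus_I_def by blast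
  hence zero: "mN (PA \<beta>) * mN (MA \<alpha>) = 0\<^sub>m (dN (AV \<beta>)) (dN (AV \<alpha>))"
    using is_rep_rel[OF rN] by fastforce
  have "m \<beta> * (k (t \<alpha>) * mN (MA \<alpha>)) = (m \<beta> * k (s \<beta>)) * mN (MA \<alpha>)"
    using assoc_mult_mat[OF m\<beta> k\<alpha> Nm\<alpha>] s\<beta> by simp
  also have "\<dots> = (k (t \<beta>) * mN (MA \<beta>)) * (mN (PA \<beta>) * mN (MA \<alpha>))"
    using is_hom_commutes[OF k \<beta>E] \<beta> assoc_mult_mat[OF k\<beta> Nm\<beta> Np\<beta>]
      assoc_mult_mat[OF mult_carrier_mat[OF k\<beta> Nm\<beta>] Np\<beta> Nm\<alpha>] s\<beta>
    by (simp add: aus_restr_mat_def)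
  finally show ?thesis using zero k\<beta> Nm\<beta> by simp
qed

lemma Phi_image_lift_exists:
  assumes g: "gentle V E s t I" and P: "is_Phi_image V E s t I d m d' m'"
    and r: "is_rep V E s t I d m" and exact: "exact_at_relations I m"
    and rM: "aus_rep V E s t I dM mM"
    and k: "is_hom V E s t d m (dM \<circ> QV) (aus_restr_mat E s t I mM) k"
    and \<alpha>: "\<alpha> \<in> cyc_arrows E s t I"
  shows "\<exists>C\<in>carrier_mat (dM (AV \<alpha>)) (d' (AV \<alpha>)). C * m' (PA \<alpha>) = mM (PA \<alpha>) * k (s \<alpha>)"
proof -
  obtain \<gamma> where rel: "(\<alpha>, \<gamma>) \<in> I" using cyc_arrow_rel_pred[OF \<alpha>] .
  have \<gamma>E: "\<gamma> \<in> E" and t\<gamma>: "t \<gamma> = s \<alpha>" using gentle_relD[OF g rel] by auto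
  note Pp = is_Phi_imageD(3)[OF P \<alpha>] and Pm = is_Phi_imageD(4)[OF P \<alpha>]
    and m\<alpha> = is_rep_carrier[OF r cyc_arrows_subset[THEN subsetD, OF \<alpha>]]
  have m\<gamma>: "m \<gamma> \<in> carrier_mat (d (s \<alpha>)) (d (s \<gamma>))" using is_rep_carrier[OF r \<gamma>E] t\<gamma> by simp
  define B where "B = mM (PA \<alpha>) * k (s \<alpha>)"
  have B: "B \<in> carrier_mat (dM (AV \<alpha>)) (d (s \<alpha>))"
    unfolding B_def using is_rep_ausD(1)[OF rM \<alpha>] is_hom_carrier[OF k] cyc_arrow_endpoints[OF g \<alpha>] by simp
  have "mat_kernel (m' (PA \<alpha>)) \<subseteq> mat_kernel B"
  proof
    fix x assume "x \<in> mat_kernel (m' (PA \<alpha>))"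
    hence x: "x \<in> carrier_vec (d (s \<alpha>))" and x0: "m' (PA \<alpha>) *\<^sub>v x = 0\<^sub>v (d' (AV \<alpha>))"
      using mat_kernelD[OF Pp] by auto
    have "m \<alpha> *\<^sub>v x = m' (MA \<alpha>) *\<^sub>v (m' (PA \<alpha>) *\<^sub>v x)"
      using is_Phi_imageD(7)[OF P \<alpha>] assoc_mult_mat_vec[OF Pm Pp x] by simp
    hence "m \<alpha> *\<^sub>v x = 0\<^sub>v (d (t \<alpha>))" using x0 Pm by simp
    then obtain y where y: "y \<in> carrier_vec (d (s \<gamma>))" and "m \<gamma> *\<^sub>v y = x"
      using kernel_in_imageD[of "m \<alpha>" "m \<gamma>" x] exact rel x m\<alpha> m\<gamma>
      unfolding exact_at_relations_def by fastforce
    hence "B *\<^sub>v x = (B * m \<gamma>) *\<^sub>v y" using assoc_mult_mat_vec[OF B m\<gamma> y] by simp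
    also have "\<dots> = 0\<^sub>v (dM (AV \<alpha>))"
      using aus_restr_hom_PA_rel_eq_0[OF g r rM k rel \<alpha>] y by (simp add: B_def)
    finally show "x \<in> mat_kernel B" using B x by (intro mat_kernelI) auto
  qed
  from mat_factor_through_surj[OF Pp is_Phi_imageD(5)[OF P \<alpha>] B this]
  show ?thesis unfolding B_def .
qed

lemma Phi_image_extend_exists:
  fixes m :: "'e \<Rightarrow> 'a::field mat"
  assumes g: "gentle V E s t I" and P: "is_Phi_image V E s t I d m d' m'"
    and r: "is_rep V E s t I d m" and exact: "exact_at_relations I m"
    and rN: "aus_rep V E s t I dN mN"
    and k: "is_hom V E s t (dN \<circ> QV) (aus_restr_mat E s t I mN) d m k"
    and \<alpha>: "\<alpha> \<in> cyc_arrows E s t I"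
  shows "\<exists>C\<in>carrier_mat (d' (AV \<alpha>)) (dN (AV \<alpha>)). m' (MA \<alpha>) * C = k (t \<alpha>) * mN (MA \<alpha>)"
proof -
  obtain \<beta> where rel: "(\<beta>, \<alpha>) \<in> I" using cyc_arrow_rel_succ[OF \<alpha>] .
  have \<beta>E: "\<beta> \<in> E" and s\<beta>: "s \<beta> = t \<alpha>" using gentle_relD[OF g rel] by auto
  note Pp = is_Phi_imageD(3)[OF P \<alpha>] and Pm = is_Phi_imageD(4)[OF P \<alpha>]
    and m\<alpha> = is_rep_carrier[OF r cyc_arrows_subset[THEN subsetD, OF \<alpha>]]
  have m\<beta>: "m \<beta> \<in> carrier_mat (d (t \<beta>)) (d (t \<alpha>))" using is_rep_carrier[OF r \<beta>E] s\<beta> by simp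
  define B where "B = k (t \<alpha>) * mN (MA \<alpha>)"
  have B: "B \<in> carrier_mat (d (t \<alpha>)) (dN (AV \<alpha>))"
    unfolding B_def using is_rep_ausD(2)[OF rN \<alpha>]
      is_hom_carrier[OF k conjunct2[OF cyc_arrow_endpoints[OF g \<alpha>]]] by simp
  show ?thesis unfolding B_def[symmetric]
  proof (rule mat_factor_through_image[OF Pm B])
    fix y :: "'a vec" assume y: "y \<in> carrier_vec (dN (AV \<alpha>))"
    have "m \<beta> *\<^sub>v (B *\<^sub>v y) = 0\<^sub>v (d (t \<beta>))"
      using assoc_mult_mat_vec[OF m\<beta> B y, symmetric] aus_restr_hom_rel_MA_eq_0[OF g r rN k rel \<alpha>] y
      by (simp add: B_def)
    moreover have "B *\<^sub>v y \<in> carrier_vec (d (t \<alpha>))" using B y by simp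
    ultimately obtain w where w: "w \<in> carrier_vec (d (s \<alpha>))" and "m \<alpha> *\<^sub>v w = B *\<^sub>v y"
      using kernel_in_imageD[of "m \<beta>" "m \<alpha>" "B *\<^sub>v y"] exact rel m\<alpha> m\<beta>
      unfolding exact_at_relations_def by fastforce
    moreover have "m' (MA \<alpha>) *\<^sub>v (m' (PA \<alpha>) *\<^sub>v w) = m \<alpha> *\<^sub>v w"
      using is_Phi_imageD(7)[OF P \<alpha>] assoc_mult_mat_vec[OF Pm Pp w] by simp
    ultimately show "\<exists>x\<in>carrier_vec (d' (AV \<alpha>)). m' (MA \<alpha>) *\<^sub>v x = B *\<^sub>v y"
      using Pp w by (metis mult_mat_vec_carrier)
  qed
qed

lemma projective_rep_Phi_image:
  assumes g: "gentle V E s t I" and pr: "projective_rep V E s t I d m"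
    and P: "is_Phi_image V E s t I d m d' m'" and exact: "exact_at_relations I m"
  shows "projective_rep (aus_V V E s t I) (aus_E E s t I) (aus_s s) (aus_t t) (aus_I E s t I) d' m'"
  unfolding projective_rep_def
proof (intro conjI allI impI)
  have r: "is_rep V E s t I d m" using pr unfolding projective_rep_def by blast
  show rep': "aus_rep V E s t I d' m'"
    by (rule is_rep_Phi_image[OF g r P])
  fix dM mM dN mN gg hh
  assume rM: "aus_rep V E s t I dM mM"
    and rN: "aus_rep V E s t I dN mN"
    and gg: "aus_hom V E s t I dM mM dN mN gg"
    and surj: "\<forall>i\<in>aus_V V E s t I. mat_surj (gg i)"
    and hh: "aus_hom V E s t I d' m' dN mN hh"
  have "\<forall>i\<in>V. mat_surj ((gg \<circ> QV) i)" using surj unfolding aus_V_def by simp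
  moreover have "is_hom V E s t d m (dN \<circ> QV) (aus_restr_mat E s t I mN) (hh \<circ> QV)"
    using is_hom_cong[OF is_hom_aus_restr[OF g rep' rN hh]] Phi_image_restr[OF P] by simp
  ultimately have "\<exists>k. is_hom V E s t d m (dM \<circ> QV) (aus_restr_mat E s t I mM) k \<and>
      (\<forall>i\<in>V. (gg \<circ> QV) i * k i = (hh \<circ> QV) i)"
    by (rule projective_repD[OF pr is_rep_aus_restr[OF g rM] is_rep_aus_restr[OF g rN]
      is_hom_aus_restr[OF g rM rN gg]])
  then obtain k0 where k0: "is_hom V E s t d m (dM \<circ> QV) (aus_restr_mat E s t I mM) k0"
    and gk0: "\<forall>i\<in>V. gg (QV i) * k0 i = hh (QV i)" by auto
  have "\<forall>\<alpha>\<in>cyc_arrows E s t I. \<exists>C. C \<in> carrier_mat (dM (AV \<alpha>)) (d' (AV \<alpha>)) \<and>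
      C * m' (PA \<alpha>) = mM (PA \<alpha>) * k0 (s \<alpha>)"
    using Phi_image_lift_exists[OF g P r exact rM k0] by blast
  from bchoice[OF this] obtain C where C: "\<forall>\<alpha>\<in>cyc_arrows E s t I. C \<alpha> \<in> carrier_mat (dM (AV \<alpha>)) (d' (AV \<alpha>)) \<and>
      C \<alpha> * m' (PA \<alpha>) = mM (PA \<alpha>) * k0 (s \<alpha>)"
    by blast
  have kk: "aus_hom V E s t I d' m' dM mM (case_aus_vert k0 C)"
    using is_hom_from_Phi_image[OF g P rM k0] C by blast
  have "aus_hom V E s t I d' m' dN mN
      (\<lambda>v. gg v * case_aus_vert k0 C v)"
    by (rule is_hom_comp[OF aus_arrowD[OF g] rep' rM rN kk gg])
  from Phi_image_homs_eq_from[OF g P this hh]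
  have "\<forall>v\<in>aus_V V E s t I. gg v * case_aus_vert k0 C v = hh v" using gk0 by simp
  thus "\<exists>k. aus_hom V E s t I d' m' dM mM k \<and>
      (\<forall>v\<in>aus_V V E s t I. gg v * k v = hh v)"
    using kk by blast
qed

lemma injective_rep_Phi_image:
  assumes g: "gentle V E s t I" and ir: "injective_rep V E s t I d m"
    and P: "is_Phi_image V E s t I d m d' m'" and exact: "exact_at_relations I m"
  shows "injective_rep (aus_V V E s t I) (aus_E E s t I) (aus_s s) (aus_t t) (aus_I E s t I) d' m'"
  unfolding injective_rep_def
proof (intro conjI allI impI)
  have r: "is_rep V E s t I d m" using ir unfolding injective_rep_def by blast
  show rep': "aus_rep V E s t I d' m'"
    by (rule is_rep_Phi_image[OF g r P])
  fix dM mM dN mN gg hh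
  assume rM: "aus_rep V E s t I dM mM"
    and rN: "aus_rep V E s t I dN mN"
    and gg: "aus_hom V E s t I dM mM dN mN gg"
    and inj: "\<forall>i\<in>aus_V V E s t I. mat_inj (gg i)"
    and hh: "aus_hom V E s t I dM mM d' m' hh"
  have "\<forall>i\<in>V. mat_inj ((gg \<circ> QV) i)" using inj unfolding aus_V_def by simp
  moreover have "is_hom V E s t (dM \<circ> QV) (aus_restr_mat E s t I mM) d m (hh \<circ> QV)"
    using is_hom_cong[OF is_hom_aus_restr[OF g rM rep' hh]] Phi_image_restr[OF P] by simp
  ultimately have "\<exists>k. is_hom V E s t (dN \<circ> QV) (aus_restr_mat E s t I mN) d m k \<and>
      (\<forall>i\<in>V. k i * (gg \<circ> QV) i = (hh \<circ> QV) i)"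
    by (rule injective_repD[OF ir is_rep_aus_restr[OF g rM] is_rep_aus_restr[OF g rN]
      is_hom_aus_restr[OF g rM rN gg]])
  then obtain k0 where k0: "is_hom V E s t (dN \<circ> QV) (aus_restr_mat E s t I mN) d m k0"
    and k0g: "\<forall>i\<in>V. k0 i * gg (QV i) = hh (QV i)" by auto
  have "\<forall>\<alpha>\<in>cyc_arrows E s t I. \<exists>C. C \<in> carrier_mat (d' (AV \<alpha>)) (dN (AV \<alpha>)) \<and>
      m' (MA \<alpha>) * C = k0 (t \<alpha>) * mN (MA \<alpha>)"
    using Phi_image_extend_exists[OF g P r exact rN k0] by blast
  from bchoice[OF this] obtain C where C: "\<forall>\<alpha>\<in>cyc_arrows E s t I. C \<alpha> \<in> carrier_mat (d' (AV \<alpha>)) (dN (AV \<alpha>)) \<and>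
      m' (MA \<alpha>) * C \<alpha> = k0 (t \<alpha>) * mN (MA \<alpha>)"
    by blast
  have kk: "aus_hom V E s t I dN mN d' m' (case_aus_vert k0 C)"
    using is_hom_to_Phi_image[OF g P rN k0] C by blast
  have "aus_hom V E s t I dM mM d' m'
      (\<lambda>v. case_aus_vert k0 C v * gg v)"
    by (rule is_hom_comp[OF aus_arrowD[OF g] rM rN rep' gg kk])
  from Phi_image_homs_eq_to[OF g P this hh]
  have "\<forall>v\<in>aus_V V E s t I. case_aus_vert k0 C v * gg v = hh v" using k0g by simp
  thus "\<exists>k. aus_hom V E s t I dN mN d' m' k \<and>
      (\<forall>v\<in>aus_V V E s t I. k v * gg v = hh v)"
    using kk by blast
qed

section \<open>Exactness of projective and injective representations\<close>

locale gentle_rep =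
  fixes V :: "'v set" and E :: "'e set" and s t :: "'e \<Rightarrow> 'v" and I :: "('e \<times> 'e) set"
    and d :: "'v \<Rightarrow> nat" and m :: "'e \<Rightarrow> 'a::field mat"
  assumes gentle: "gentle V E s t I" and rep: "is_rep V E s t I d m"
begin

definition path :: "'v \<Rightarrow> 'e list \<Rightarrow> 'v \<Rightarrow> bool" where
  "path i p j \<longleftrightarrow> nonzero_path E s t I p \<and> (if p = [] then i = j else s (hd p) = i \<and> t (last p) = j)"

lemma path_Nil [simp]: "path i [] j \<longleftrightarrow> i = j"
  unfolding path_def nonzero_path_def by simp

lemma path_Cons:
  "path i (e # p) j \<longleftrightarrow> e \<in> E \<and> s e = i \<and> path (t e) p j \<and> (p \<noteq> [] \<longrightarrow> (hd p, e) \<notin> I)"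
  by (cases p) (auto simp: path_def nonzero_path_iff_successively)

lemma path_snoc:
  "path i (p @ [e]) j \<longleftrightarrow> e \<in> E \<and> t e = j \<and> path i p (s e) \<and> (p \<noteq> [] \<longrightarrow> (e, last p) \<notin> I)"
  by (cases p rule: rev_cases) (auto simp: path_def nonzero_path_iff_successively successively_append_iff hd_append)

fun path_mat :: "'v \<Rightarrow> 'e list \<Rightarrow> 'a mat" where
  "path_mat i [] = 1\<^sub>m (d i)"
| "path_mat i (e # p) = path_mat (t e) p * m e"

lemma path_mat_carrier: "path i p j \<Longrightarrow> path_mat i p \<in> carrier_mat (d j) (d i)"
proof (induction p arbitrary: i)
  case (Cons e p)
  hence "e \<in> E" "s e = i" "path (t e) p j" by (simp_all add: path_Cons)
  thus ?case using Cons.IH is_rep_carrier[OF rep] by (metis mult_carrier_mat path_mat.simps(2))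
qed simp

lemma path_mat_snoc:
  assumes "path i p (s e)" "e \<in> E"
  shows "path_mat i (p @ [e]) = m e * path_mat i p"
  using assms(1)
proof (induction p arbitrary: i)
  case Nil
  thus ?case using is_rep_carrier[OF rep assms(2)] by simp
next
  case (Cons f p)
  hence f: "f \<in> E" "s f = i" "path (t f) p (s e)" by (auto simp: path_Cons)
  have "path_mat i ((f # p) @ [e]) = m e * path_mat (t f) p * m f" using Cons.IH[OF f(3)] by simp
  also have "\<dots> = m e * path_mat i (f # p)"
    using assoc_mult_mat[OF is_rep_carrier[OF rep assms(2)] path_mat_carrier[OF f(3)] is_rep_carrier[OF rep f(1)]]
    by simp
  finally show ?case .
qed

lemma mult_path_mat_eq_0:
  assumes p: "path i p (s e)" and e: "e \<in> E" and not_path: "\<not> path i (p @ [e]) (t e)"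
  shows "m e * path_mat i p = 0\<^sub>m (d (t e)) (d i)"
proof -
  have "p \<noteq> []" and "(e, last p) \<in> I" using p e not_path by (auto simp: path_snoc)
  then obtain q l where pq: "p = q @ [l]" and rel: "(e, l) \<in> I" by (metis append_butlast_last_id)
  have l: "l \<in> E" "t l = s e" "path i q (s l)" using p unfolding pq by (auto simp: path_snoc)
  note mq = path_mat_carrier[OF l(3)] and ml = is_rep_carrier[OF rep l(1)] and me = is_rep_carrier[OF rep e]
  have "m e * path_mat i p = m e * (m l * path_mat i q)" using path_mat_snoc[OF l(3,1)] pq by simp
  also have "\<dots> = (m e * m l) * path_mat i q" using assoc_mult_mat[OF me _ mq, of "m l"] ml l(2) by simp
  also have "\<dots> = 0\<^sub>m (d (t e)) (d i)" using is_rep_rel[OF rep rel] mq by simp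
  finally show ?thesis .
qed

lemma path_mat_mult_eq_0:
  assumes p: "path (t e) p j" and e: "e \<in> E" and not_path: "\<not> path (s e) (e # p) j"
  shows "path_mat (t e) p * m e = 0\<^sub>m (d j) (d (s e))"
proof -
  have "p \<noteq> []" and "(hd p, e) \<in> I" using p e not_path by (auto simp: path_Cons)
  then obtain f q where pq: "p = f # q" and rel: "(f, e) \<in> I" by (metis list.collapse)
  have f: "f \<in> E" "s f = t e" "path (t f) q j" using p unfolding pq by (auto simp: path_Cons)
  note mq = path_mat_carrier[OF f(3)] and mf = is_rep_carrier[OF rep f(1)] and me = is_rep_carrier[OF rep e]
  have "path_mat (t e) p * m e = path_mat (t f) q * (m f * m e)"
    using assoc_mult_mat[OF mq mf, of "m e"] me f(2) pq by simp
  also have "\<dots> = 0\<^sub>m (d j) (d (s e))" using is_rep_rel[OF rep rel] mq by simp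
  finally show ?thesis .
qed

definition free_basis :: "'v \<Rightarrow> ('v \<times> 'e list \<times> nat) set" where
  "free_basis j = {(i, p, c). i \<in> V \<and> path i p j \<and> c < d i}"

definition cofree_basis :: "'v \<Rightarrow> ('v \<times> 'e list \<times> nat) set" where
  "cofree_basis j = {(i, p, c). i \<in> V \<and> path j p i \<and> c < d i}"

lemma finite_bases: "finite (free_basis j)" "finite (cofree_basis j)"
proof -
  have fin: "finite (Sigma V (\<lambda>i. {p. nonzero_path E s t I p} \<times> {..<d i}))"
    using gentle finite_nonzero_paths[OF gentle] unfolding gentle_def by blast
  show "finite (free_basis j)" "finite (cofree_basis j)"
    by (rule finite_subset[OF _ fin], auto simp: free_basis_def cofree_basis_def path_def)+
qed

definition free_list :: "'v \<Rightarrow> ('v \<times> 'e list \<times> nat) list" where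
  "free_list j = distinct_list_of (free_basis j)"

definition cofree_list :: "'v \<Rightarrow> ('v \<times> 'e list \<times> nat) list" where
  "cofree_list j = distinct_list_of (cofree_basis j)"

lemma free_list: "distinct (free_list j)" "set (free_list j) = free_basis j"
  using distinct_list_of[OF finite_bases(1)] unfolding free_list_def by auto

lemma cofree_list: "distinct (cofree_list j)" "set (cofree_list j) = cofree_basis j"
  using distinct_list_of[OF finite_bases(2)] unfolding cofree_list_def by auto

definition snoc_arrow :: "'e \<Rightarrow> 'v \<times> 'e list \<times> nat \<Rightarrow> 'v \<times> 'e list \<times> nat" where
  "snoc_arrow e = (\<lambda>(i, p, c). (i, p @ [e], c))"

definition cons_arrow :: "'e \<Rightarrow> 'v \<times> 'e list \<times> nat \<Rightarrow> 'v \<times> 'e list \<times> nat" where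
  "cons_arrow e = (\<lambda>(i, p, c). (i, e # p, c))"

lemma inj_snoc_arrow: "inj_on (snoc_arrow e) A" and inj_cons_arrow: "inj_on (cons_arrow e) A"
  unfolding inj_on_def snoc_arrow_def cons_arrow_def by auto

text \<open>The direct sum over i of d i copies of the indecomposable projective at i: its space at j
  has a basis of triples (i, p, c) with p a nonzero path from i to j and c < d i, and the arrow
  e appends e to p. The cover maps (i, p, c) to the c-th column of the matrix of p.\<close>

definition free_dim :: "'v \<Rightarrow> nat" where "free_dim j = length (free_list j)"

definition free_mat :: "'e \<Rightarrow> 'a mat" where
  "free_mat e = basis_map_mat (snoc_arrow e) (free_list (s e)) (free_list (t e))"

definition path_col :: "'v \<times> 'e list \<times> nat \<Rightarrow> 'a vec" where
  "path_col = (\<lambda>(i, p, c). col (path_mat i p) c)"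

definition cover :: "'v \<Rightarrow> 'a mat" where
  "cover j = mat_of_cols (d j) (map path_col (free_list j))"

text \<open>Dually, the direct sum of d i copies of the indecomposable injective at i, with basis
  indexed by the nonzero paths starting at j; the envelope records the coordinates of a vector
  along all these paths.\<close>

definition cofree_dim :: "'v \<Rightarrow> nat" where "cofree_dim j = length (cofree_list j)"

definition cofree_mat :: "'e \<Rightarrow> 'a mat" where
  "cofree_mat e = transpose_mat (basis_map_mat (cons_arrow e) (cofree_list (t e)) (cofree_list (s e)))"

definition path_row :: "'v \<Rightarrow> 'v \<times> 'e list \<times> nat \<Rightarrow> 'a vec" where
  "path_row j = (\<lambda>(i, p, c). row (path_mat j p) c)"

definition envelope :: "'v \<Rightarrow> 'a mat" where
  "envelope j = mat_of_rows (d j) (map (path_row j) (cofree_list j))"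

lemma path_col_carrier: "x \<in> free_basis j \<Longrightarrow> path_col x \<in> carrier_vec (d j)"
  using path_mat_carrier by (auto simp: free_basis_def path_col_def)

lemma path_row_carrier: "y \<in> cofree_basis j \<Longrightarrow> path_row j y \<in> carrier_vec (d j)"
  using path_mat_carrier by (auto simp: cofree_basis_def path_row_def)

lemma cover_carrier: "cover j \<in> carrier_mat (d j) (free_dim j)"
  unfolding cover_def free_dim_def using mat_of_cols_carrier(1)[of "d j" "map path_col (free_list j)"] by simp

lemma envelope_carrier: "envelope j \<in> carrier_mat (cofree_dim j) (d j)"
  unfolding envelope_def cofree_dim_def
  using mat_of_rows_carrier(1)[of "d j" "map (path_row j) (cofree_list j)"] by simp

lemma is_rep_free: "is_rep V E s t I free_dim free_mat"
  unfolding is_rep_def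
proof (intro conjI ballI)
  fix x assume "x \<in> I"
  then obtain b a where x: "x = (b, a)" and rel: "(b, a) \<in> I" by (cases x) auto
  have tab: "t a = s b" using gentle_relD[OF gentle rel] by simp
  have "basis_map_mat (snoc_arrow b) (free_list (t a)) (free_list (t b)) *
      basis_map_mat (snoc_arrow a) (free_list (s a)) (free_list (t a)) =
      (0\<^sub>m (length (free_list (t b))) (length (free_list (s a))) :: 'a mat)"
  proof (rule basis_map_mat_mult_eq_0[OF free_list(1) free_list(1)])
    fix y :: "'v \<times> 'e list \<times> nat"
    obtain i p c where "y = (i, p, c)" by (cases y)
    thus "snoc_arrow b (snoc_arrow a y) \<notin> set (free_list (t b))"
      using rel path_snoc[of i "p @ [a]" b "t b"] by (auto simp: free_list free_basis_def snoc_arrow_def)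
  qed
  thus "case x of (b, a) \<Rightarrow> free_mat b * free_mat a = 0\<^sub>m (free_dim (t b)) (free_dim (s a))"
    using x tab by (simp add: free_mat_def free_dim_def)
qed (simp add: free_mat_def free_dim_def)

lemma is_rep_cofree: "is_rep V E s t I cofree_dim cofree_mat"
  unfolding is_rep_def
proof (intro conjI ballI)
  fix x assume "x \<in> I"
  then obtain b a where x: "x = (b, a)" and rel: "(b, a) \<in> I" by (cases x) auto
  have tab: "t a = s b" using gentle_relD[OF gentle rel] by simp
  have "basis_map_mat (cons_arrow a) (cofree_list (t a)) (cofree_list (s a)) *
      basis_map_mat (cons_arrow b) (cofree_list (t b)) (cofree_list (t a)) =
      (0\<^sub>m (length (cofree_list (s a))) (length (cofree_list (t b))) :: 'a mat)"
  proof (rule basis_map_mat_mult_eq_0[OF cofree_list(1) cofree_list(1)])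
    fix y :: "'v \<times> 'e list \<times> nat"
    obtain i p c where "y = (i, p, c)" by (cases y)
    thus "cons_arrow a (cons_arrow b y) \<notin> set (cofree_list (s a))"
      using rel by (auto simp: cofree_list cofree_basis_def cons_arrow_def path_Cons)
  qed
  moreover have "transpose_mat (basis_map_mat (cons_arrow b) (cofree_list (t b)) (cofree_list (t a))) *
      transpose_mat (basis_map_mat (cons_arrow a) (cofree_list (t a)) (cofree_list (s a))) =
      (transpose_mat (basis_map_mat (cons_arrow a) (cofree_list (t a)) (cofree_list (s a)) *
      basis_map_mat (cons_arrow b) (cofree_list (t b)) (cofree_list (t a))) :: 'a mat)"
    by (rule transpose_mult[symmetric, OF basis_map_mat_carrier(1) basis_map_mat_carrier(1)])
  ultimately show "case x of (b, a) \<Rightarrow> cofree_mat b * cofree_mat a = 0\<^sub>m (cofree_dim (t b)) (cofree_dim (s a))"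
    using x tab by (simp add: cofree_mat_def cofree_dim_def)
qed (simp add: cofree_mat_def cofree_dim_def)

lemma mult_path_col:
  assumes x: "x \<in> free_basis (s e)" and e: "e \<in> E"
  shows "m e *\<^sub>v path_col x =
    (if snoc_arrow e x \<in> free_basis (t e) then path_col (snoc_arrow e x) else 0\<^sub>v (d (t e)))"
proof -
  obtain i p c where xipc: "x = (i, p, c)" and i: "i \<in> V" and p: "path i p (s e)" and c: "c < d i"
    using x unfolding free_basis_def by blast
  note me = is_rep_carrier[OF rep e] and mp = path_mat_carrier[OF p]
  have "m e *\<^sub>v path_col x = col (m e * path_mat i p) c"
    using col_mult2[OF me mp c] by (simp add: xipc path_col_def)
  moreover have "snoc_arrow e x \<in> free_basis (t e) \<longleftrightarrow> path i (p @ [e]) (t e)"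
    using i c by (simp add: xipc snoc_arrow_def free_basis_def)
  ultimately show ?thesis
    using path_mat_snoc[OF p e] mult_path_mat_eq_0[OF p e] c
    by (auto simp: xipc snoc_arrow_def path_col_def)
qed

lemma transpose_mult_path_row:
  assumes y: "y \<in> cofree_basis (t e)" and e: "e \<in> E"
  shows "transpose_mat (m e) *\<^sub>v path_row (t e) y =
    (if cons_arrow e y \<in> cofree_basis (s e) then path_row (s e) (cons_arrow e y) else 0\<^sub>v (d (s e)))"
proof -
  obtain i p c where yipc: "y = (i, p, c)" and i: "i \<in> V" and p: "path (t e) p i" and c: "c < d i"
    using y unfolding cofree_basis_def by blast
  note me = is_rep_carrier[OF rep e] and mp = path_mat_carrier[OF p]
  have "transpose_mat (m e) *\<^sub>v path_row (t e) y = row (path_mat (t e) p * m e) c"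
    using row_mult_eq_transpose_mult_vec[OF mp me c] by (simp add: yipc path_row_def)
  moreover have "cons_arrow e y \<in> cofree_basis (s e) \<longleftrightarrow> path (s e) (e # p) i"
    using i c by (simp add: yipc cons_arrow_def cofree_basis_def)
  ultimately show ?thesis
    using path_mat_mult_eq_0[OF p e] c by (auto simp: yipc cons_arrow_def path_row_def)
qed

lemma cover_hom: "is_hom V E s t free_dim free_mat d m cover"
  unfolding is_hom_def
proof (intro conjI ballI)
  fix e assume e: "e \<in> E"
  have "cover (t e) * free_mat e = mat_of_cols (d (t e)) (map (\<lambda>x. if snoc_arrow e x \<in> free_basis (t e)
      then path_col (snoc_arrow e x) else 0\<^sub>v (d (t e))) (free_list (s e)))"
    unfolding cover_def free_mat_def
    by (subst mat_of_cols_mult_basis_map_mat) (simp_all add: free_list path_col_carrier)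
  also have "\<dots> = mat_of_cols (d (t e)) (map (\<lambda>x. m e *\<^sub>v path_col x) (free_list (s e)))"
    by (intro arg_cong[where f = "mat_of_cols _"] map_cong) (simp_all add: free_list mult_path_col[OF _ e])
  also have "\<dots> = m e * cover (s e)"
    unfolding cover_def using is_rep_carrier[OF rep e] path_col_carrier
    by (subst mult_mat_of_cols) (auto simp: free_list o_def)
  finally show "cover (t e) * free_mat e = m e * cover (s e)" .
qed (rule cover_carrier)

lemma envelope_hom: "is_hom V E s t d m cofree_dim cofree_mat envelope"
  unfolding is_hom_def
proof (intro conjI ballI)
  fix e assume e: "e \<in> E"
  note me = is_rep_carrier[OF rep e]
  have "transpose_mat (envelope (t e) * m e) = transpose_mat (m e) * transpose_mat (envelope (t e))"
    using transpose_mult[OF envelope_carrier me] .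
  also have "\<dots> = mat_of_cols (d (s e)) (map (\<lambda>y. transpose_mat (m e) *\<^sub>v path_row (t e) y) (cofree_list (t e)))"
    unfolding envelope_def transpose_mat_of_rows using me path_row_carrier
    by (subst mult_mat_of_cols) (auto simp: cofree_list o_def)
  also have "\<dots> = mat_of_cols (d (s e)) (map (\<lambda>y. if cons_arrow e y \<in> cofree_basis (s e)
      then path_row (s e) (cons_arrow e y) else 0\<^sub>v (d (s e))) (cofree_list (t e)))"
    by (intro arg_cong[where f = "mat_of_cols _"] map_cong)
      (simp_all add: cofree_list transpose_mult_path_row[OF _ e])
  also have "\<dots> = transpose_mat (envelope (s e)) *
      basis_map_mat (cons_arrow e) (cofree_list (t e)) (cofree_list (s e))"
    unfolding envelope_def transpose_mat_of_rows
    by (subst mat_of_cols_mult_basis_map_mat) (simp_all add: cofree_list path_row_carrier)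
  also have "\<dots> = transpose_mat (cofree_mat e * envelope (s e))"
  proof -
    have "cofree_mat e \<in> carrier_mat (cofree_dim (t e)) (cofree_dim (s e))"
      by (simp add: cofree_mat_def cofree_dim_def)
    thus ?thesis using transpose_mult[OF _ envelope_carrier] by (simp add: cofree_mat_def)
  qed
  finally show "envelope (t e) * m e = cofree_mat e * envelope (s e)"
    by (metis transpose_transpose)
qed (rule envelope_carrier)

lemma cover_surj:
  assumes j: "j \<in> V"
  shows "mat_surj (cover j)"
proof (rule mat_surj_if_unit_cols[OF cover_carrier])
  fix c assume c: "c < d j"
  have x: "(j, [], c) \<in> set (free_list j)" using j c by (simp add: free_list free_basis_def)
  let ?r = "index_of (free_list j) (j, [], c)"
  have r: "?r < free_dim j" "free_list j ! ?r = (j, [], c)"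
    using index_of[OF free_list(1) x] by (simp_all add: free_dim_def)
  have "col (cover j) ?r = path_col (j, [], c)"
    using r path_col_carrier x by (simp add: cover_def free_dim_def free_list)
  also have "\<dots> = unit_vec (d j) c" using c by (simp add: path_col_def)
  finally show "\<exists>r<free_dim j. col (cover j) r = unit_vec (d j) c" using r(1) by blast
qed

lemma envelope_inj:
  assumes j: "j \<in> V"
  shows "mat_inj (envelope j)"
proof (rule mat_inj_if_unit_rows[OF envelope_carrier])
  fix c assume c: "c < d j"
  have y: "(j, [], c) \<in> set (cofree_list j)" using j c by (simp add: cofree_list cofree_basis_def)
  let ?r = "index_of (cofree_list j) (j, [], c)"
  have r: "?r < cofree_dim j" "cofree_list j ! ?r = (j, [], c)"
    using index_of[OF cofree_list(1) y] by (simp_all add: cofree_dim_def)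
  have "row (envelope j) ?r = path_row j (j, [], c)"
    using r path_row_carrier y by (simp add: envelope_def cofree_dim_def cofree_list)
  also have "\<dots> = unit_vec (d j) c" using c by (simp add: path_row_def)
  finally show "\<exists>r<cofree_dim j. row (envelope j) r = unit_vec (d j) c" using r(1) by blast
qed

lemma free_basis_not_snoc:
  assumes rel: "(b, a) \<in> I" and y: "y \<in> free_basis (s b)" and not_snoc: "snoc_arrow b y \<notin> free_basis (t b)"
  shows "y \<in> snoc_arrow a ` free_basis (s a)"
proof -
  obtain i p c where y_eq: "y = (i, p, c)" and i: "i \<in> V" and p: "path i p (s b)" and c: "c < d i"
    using y unfolding free_basis_def by blast
  have "\<not> path i (p @ [b]) (t b)" using not_snoc i c by (simp add: y_eq snoc_arrow_def free_basis_def)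
  hence "p \<noteq> []" and "(b, last p) \<in> I" using p gentle_relD[OF gentle rel] by (auto simp: path_snoc)
  hence "p = butlast p @ [a]" using gentle_rel_pred_unique[OF gentle _ rel] by (metis append_butlast_last_id)
  hence "path i (butlast p) (s a)" and "y = snoc_arrow a (i, butlast p, c)"
    using p by (metis path_snoc, simp add: y_eq snoc_arrow_def)
  thus ?thesis using i c unfolding free_basis_def by blast
qed

lemma cofree_basis_not_cons:
  assumes rel: "(b, a) \<in> I" and y: "y \<in> cofree_basis (t a)" and not_cons: "cons_arrow a y \<notin> cofree_basis (s a)"
  shows "y \<in> cons_arrow b ` cofree_basis (t b)"
proof -
  obtain i p c where y_eq: "y = (i, p, c)" and i: "i \<in> V" and p: "path (t a) p i" and c: "c < d i"
    using y unfolding cofree_basis_def by blast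
  have "\<not> path (s a) (a # p) i" using not_cons i c by (simp add: y_eq cons_arrow_def cofree_basis_def)
  hence "p \<noteq> []" and "(hd p, a) \<in> I" using p gentle_relD[OF gentle rel] by (auto simp: path_Cons)
  hence "p = b # tl p" using gentle_rel_succ_unique[OF gentle _ rel] by (metis list.collapse)
  hence "path (t b) (tl p) i" and "y = cons_arrow b (i, tl p, c)"
    using p by (metis path_Cons, simp add: y_eq cons_arrow_def)
  thus ?thesis using i c unfolding cofree_basis_def by blast
qed

lemma free_exact: "exact_at_relations I free_mat"
  unfolding exact_at_relations_def
proof (intro ballI, clarify)
  fix b a assume rel: "(b, a) \<in> I"
  have "kernel_in_image (basis_map_mat (snoc_arrow b) (free_list (s b)) (free_list (t b)) :: 'a mat)
      (basis_map_mat (snoc_arrow a) (free_list (s a)) (free_list (s b)))"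
    by (rule kernel_in_image_basis_map_mat[OF free_list(1) free_list(1) free_list(1) inj_snoc_arrow inj_snoc_arrow])
      (use free_basis_not_snoc[OF rel] in \<open>auto simp: free_list\<close>)
  thus "kernel_in_image (free_mat b) (free_mat a)"
    using gentle_relD[OF gentle rel] by (simp add: free_mat_def)
qed

lemma cofree_exact: "exact_at_relations I cofree_mat"
  unfolding exact_at_relations_def
proof (intro ballI, clarify)
  fix b a assume rel: "(b, a) \<in> I"
  have "kernel_in_image (transpose_mat (basis_map_mat (cons_arrow b) (cofree_list (t b)) (cofree_list (t a))) :: 'a mat)
      (transpose_mat (basis_map_mat (cons_arrow a) (cofree_list (t a)) (cofree_list (s a))))"
    by (rule kernel_in_image_transpose_basis_map_mat[OF cofree_list(1) cofree_list(1) inj_cons_arrow])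
      (use cofree_basis_not_cons[OF rel] in \<open>auto simp: cofree_list\<close>)
  thus "kernel_in_image (cofree_mat b) (cofree_mat a)"
    using gentle_relD[OF gentle rel] by (simp add: cofree_mat_def)
qed

lemma exact_at_relations_if_projective:
  assumes "projective_rep V E s t I d m"
  shows "exact_at_relations I m"
proof -
  obtain k where k: "is_hom V E s t d m free_dim free_mat k" and retract: "\<forall>i\<in>V. cover i * k i = 1\<^sub>m (d i)"
    using projective_repD[OF assms is_rep_free rep cover_hom _ is_hom_id[OF rep]] cover_surj by blast
  show ?thesis by (rule exact_at_relations_retract[OF gentle rep is_rep_free k cover_hom retract free_exact])
qed

lemma exact_at_relations_if_injective:
  assumes "injective_rep V E s t I d m"
  shows "exact_at_relations I m"
proof -
  obtain k where k: "is_hom V E s t cofree_dim cofree_mat d m k" and retract: "\<forall>i\<in>V. k i * envelope i = 1\<^sub>m (d i)"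
    using injective_repD[OF assms rep is_rep_cofree envelope_hom _ is_hom_id[OF rep]] envelope_inj by blast
  show ?thesis by (rule exact_at_relations_retract[OF gentle rep is_rep_cofree envelope_hom k retract cofree_exact])
qed

end

theorem lemma3p4:
  fixes V :: "'v set" and E :: "'e set" and s t :: "'e \<Rightarrow> 'v" and I :: "('e \<times> 'e) set"
  assumes "alg_closed TYPE('a::field)"
    and "gentle V E s t I"
  shows "(\<forall>d (m :: 'e \<Rightarrow> 'a mat) d' m'.
            projective_rep V E s t I d m \<longrightarrow> is_Phi_image V E s t I d m d' m' \<longrightarrow>
            projective_rep (aus_V V E s t I) (aus_E E s t I) (aus_s s) (aus_t t) (aus_I E s t I) d' m') \<and>
         (\<forall>d (m :: 'e \<Rightarrow> 'a mat) d' m'.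
            injective_rep V E s t I d m \<longrightarrow> is_Phi_image V E s t I d m d' m' \<longrightarrow>
            injective_rep (aus_V V E s t I) (aus_E E s t I) (aus_s s) (aus_t t) (aus_I E s t I) d' m')"
proof (intro conjI allI impI)
  fix d :: "'v \<Rightarrow> nat" and m :: "'e \<Rightarrow> 'a mat" and d' m'
  assume pr: "projective_rep V E s t I d m" and P: "is_Phi_image V E s t I d m d' m'"
  interpret gentle_rep V E s t I d m
    using assms(2) pr unfolding projective_rep_def by unfold_locales blast+
  show "projective_rep (aus_V V E s t I) (aus_E E s t I) (aus_s s) (aus_t t) (aus_I E s t I) d' m'"
    using projective_rep_Phi_image[OF gentle pr P exact_at_relations_if_projective[OF pr]] .
next
  fix d :: "'v \<Rightarrow> nat" and m :: "'e \<Rightarrow> 'a mat" and d' m'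
  assume ir: "injective_rep V E s t I d m" and P: "is_Phi_image V E s t I d m d' m'"
  interpret gentle_rep V E s t I d m
    using assms(2) ir unfolding injective_rep_def by unfold_locales blast+
  show "injective_rep (aus_V V E s t I) (aus_E E s t I) (aus_s s) (aus_t t) (aus_I E s t I) d' m'"
    using injective_rep_Phi_image[OF gentle ir P exact_at_relations_if_injective[OF ir]] .
qed

end
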